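(* Let $G$ be a finite two-player zero-sum extensive form game with perfect recall, and let $\boldsymbol\sigma^0,\boldsymbol\sigma^1,\dots$ be the strategy profiles generated by CFR$^+$ with alternating updates, so that Player 1's regret-like values are updated using $\boldsymbol{v}^{(\sigma^t_1,\sigma^t_2)}$ and Player 2's using $\boldsymbol{v}^{(\sigma^{t+1}_1,\sigma^t_2)}$. Let $l:=\max_{y,z\in Z}(u_1(y)-u_1(z))$, let $k:=\max_I|A(I)|$, and let $|\mathcal{I}|$ be the total number of information sets of Players 1 and 2. Then for every $t\ge1$, the exploitability of the weighted average profile $$\Bigl(\tfrac{2}{t^2+t}\textstyle\sum_{i=1}^{t}i\,\sigma^i_1,\ \tfrac{2}{t^2+t}\sum_{i=0}^{t-1}(i+1)\,\sigma^i_2\Bigr)$$ is at most $2|\mathcal{I}|\,l\sqrt{k/t}$.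
   Context: Extensive form game: a finite tree of histories $h$ (sequences of actions from the root), terminal histories $Z$, actions $A(h)$ at nonterminal $h$, an acting player $P(h)\in\{1,2,c\}$ where $c$ is chance acting with fixed probabilities, utilities $u_1(z)=-u_2(z)$ at terminals, and for each player a partition of that player's histories into information sets $I$ (all $h\in I$ share the same legal actions $A(I)$); perfect recall as usual. A strategy $\sigma_p$ gives a distribution $\boldsymbol{\sigma}_p(I)$ over $A(I)$ at each player-$p$ information set; $u^{\boldsymbol\sigma}_p$ is player $p$'s expected utility. For a profile $\boldsymbol{\sigma}$ and terminal $z$, $\pi^{\boldsymbol\sigma}_{-p}(z)$ is the product of probabilities of chance's and the opponent's actions on the path to $z$; for $h\sqsubseteq z$, $\pi^{\boldsymbol\sigma}_p(z\mid h)$ is the product of probabilities under $\sigma_p$ of $p$'s actions from $h$ to $z$. Counterfactual values: $v^{\boldsymbol\sigma}_p(h):=\sum_{z\in Z,\,h\sqsubseteq z}\pi^{\boldsymbol\sigma}_{-p}(z)\pi^{\boldsymbol\sigma}_p(z\mid h)u_p(z)$ and, for an information set $I$ of player $p$, $v^{\boldsymbol\sigma}(I)_a:=\sum_{h\in I}v^{\boldsymbol\sigma}_p(ha)$. With $x^+=\max(x,0)$ componentwise and $\boldsymbol{\sigma}_{\mathrm{rm}}(\boldsymbol{x}):=\boldsymbol{x}^+/(\boldsymbol{1}\cdot\boldsymbol{x}^+)$ if some $x_a>0$, else the uniform distribution, CFR$^+$ with alternating updates keeps $\boldsymbol{q}^t(I)$ for each information set, with $\boldsymbol{q}^0(I)=\boldsymbol0$,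 plays $\boldsymbol\sigma^t(I)=\boldsymbol{\sigma}_{\mathrm{rm}}(\boldsymbol{q}^t(I))$, and sets $\boldsymbol{q}^{t+1}(I)=(\boldsymbol{q}^t(I)+\boldsymbol{v}^t(I)-(\boldsymbol\sigma^t(I)\cdot\boldsymbol{v}^t(I))\boldsymbol1)^+$, where $\boldsymbol{v}^t(I)=\boldsymbol{v}^{(\sigma^t_1,\sigma^t_2)}(I)$ for Player-1 information sets and $\boldsymbol{v}^t(I)=\boldsymbol{v}^{(\sigma^{t+1}_1,\sigma^t_2)}(I)$ for Player-2 information sets. A weighted average $\sum_i w_i\sigma^i_p$ (weights summing to 1) denotes the strategy of player $p$ whose reach probabilities of every history are the corresponding weighted average of the reach probabilities of the $\sigma^i_p$ (equivalently, the mixture with weights $w_i$). Exploitability: $\mathrm{expl}(\sigma_1,\sigma_2):=\max_{\sigma^*_1}u_1^{(\sigma^*_1,\sigma_2)}+\max_{\sigma^*_2}u_2^{(\sigma_1,\sigma^*_2)}$. *)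

theory Defs
  imports Complex_Main
begin

text \<open>Histories are action lists; the game tree is the
prefix-closed finite set hist. plr h is the acting player at a nonterminal history
(0 = chance, 1, 2). chn h a is chance's probability of action a at h. util z is
u_1(z) (with u_2 = - u_1). iset h is the information set (a set of histories)
containing the player-1/2 history h.\<close>

record 'a efg =
  hist :: "'a list set"
  plr :: "'a list \<Rightarrow> nat"
  chn :: "'a list \<Rightarrow> 'a \<Rightarrow> real"
  util :: "'a list \<Rightarrow> real"
  iset :: "'a list \<Rightarrow> 'a list set"

definition acts :: "'a efg \<Rightarrow> 'a list \<Rightarrow> 'a set" where
  "acts G h = {a. h @ [a] \<in> hist G}"

definition terminals :: "'a efg \<Rightarrow> 'a list set" where
  "terminals G = {z \<in> hist G. acts G z = {}}"

definition nonterm :: "'a efg \<Rightarrow> 'a list \<Rightarrow> bool" where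
  "nonterm G h \<longleftrightarrow> h \<in> hist G \<and> acts G h \<noteq> {}"

definition infosets :: "'a efg \<Rightarrow> nat \<Rightarrow> 'a list set set" where
  "infosets G p = {iset G h | h. nonterm G h \<and> plr G h = p}"

text \<open>Legal actions A(I) of an information set (all its histories share them).\<close>
definition iacts :: "'a efg \<Rightarrow> 'a list set \<Rightarrow> 'a set" where
  "iacts G I = (\<Union>h\<in>I. acts G h)"

definition own_seq :: "'a efg \<Rightarrow> nat \<Rightarrow> 'a list \<Rightarrow> ('a list set \<times> 'a) list" where
  "own_seq G p h = [(iset G (take i h), h ! i). i \<leftarrow> [0..<length h], plr G (take i h) = p]"

definition wf_game :: "'a efg \<Rightarrow> bool" where
  "wf_game G \<longleftrightarrow>
     finite (hist G) \<and> [] \<in> hist G \<and>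
     (\<forall>h\<in>hist G. \<forall>i. take i h \<in> hist G) \<and>
     (\<forall>h. nonterm G h \<longrightarrow> plr G h \<in> {0, 1, 2}) \<and>
     (\<forall>h. nonterm G h \<and> plr G h = 0 \<longrightarrow>
        (\<forall>a\<in>acts G h. 0 \<le> chn G h a) \<and> sum (chn G h) (acts G h) = 1) \<and>
     (\<forall>h. nonterm G h \<and> plr G h \<in> {1, 2} \<longrightarrow>
        h \<in> iset G h \<and>
        (\<forall>h'\<in>iset G h. nonterm G h' \<and> plr G h' = plr G h \<and>
                        iset G h' = iset G h \<and> acts G h' = acts G h)) \<and>
     (\<forall>h h'. nonterm G h \<and> plr G h \<in> {1, 2} \<and> h' \<in> iset G h \<longrightarrow>
        own_seq G (plr G h) h = own_seq G (plr G h) h')"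

definition strategy :: "'a efg \<Rightarrow> nat \<Rightarrow> ('a list set \<Rightarrow> 'a \<Rightarrow> real) \<Rightarrow> bool" where
  "strategy G p s \<longleftrightarrow>
     (\<forall>I\<in>infosets G p. (\<forall>a\<in>iacts G I. 0 \<le> s I a) \<and> sum (s I) (iacts G I) = 1)"

definition reach :: "'a efg \<Rightarrow> nat \<Rightarrow> ('a list set \<Rightarrow> 'a \<Rightarrow> real) \<Rightarrow> 'a list \<Rightarrow> real" where
  "reach G p s h = (\<Prod>i\<in>{i. i < length h \<and> plr G (take i h) = p}. s (iset G (take i h)) (h ! i))"

definition chance_reach :: "'a efg \<Rightarrow> 'a list \<Rightarrow> real" where
  "chance_reach G h = (\<Prod>i\<in>{i. i < length h \<and> plr G (take i h) = 0}. chn G (take i h) (h ! i))"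

definition cond_reach :: "'a efg \<Rightarrow> nat \<Rightarrow> ('a list set \<Rightarrow> 'a \<Rightarrow> real) \<Rightarrow> 'a list \<Rightarrow> 'a list \<Rightarrow> real" where
  "cond_reach G p s h z =
     (\<Prod>i\<in>{i. length h \<le> i \<and> i < length z \<and> plr G (take i z) = p}. s (iset G (take i z)) (z ! i))"

text \<open>Player 1's expected utility, given the reach-probability functions of both players
(so that weighted averages of strategies, defined through their reach probabilities,
can be plugged in directly).\<close>
definition exp_util :: "'a efg \<Rightarrow> ('a list \<Rightarrow> real) \<Rightarrow> ('a list \<Rightarrow> real) \<Rightarrow> real" where
  "exp_util G r1 r2 = (\<Sum>z\<in>terminals G. chance_reach G z * r1 z * r2 z * util G z)"

definition expl :: "'a efg \<Rightarrow> ('a list \<Rightarrow> real) \<Rightarrow> ('a list \<Rightarrow> real) \<Rightarrow> real" where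
  "expl G r1 r2 =
     (SUP s\<in>{s. strategy G 1 s}. exp_util G (reach G 1 s) r2) +
     (SUP s\<in>{s. strategy G 2 s}. - exp_util G r1 (reach G 2 s))"

definition cf_value :: "'a efg \<Rightarrow> nat \<Rightarrow> ('a list set \<Rightarrow> 'a \<Rightarrow> real) \<Rightarrow>
    ('a list set \<Rightarrow> 'a \<Rightarrow> real) \<Rightarrow> 'a list \<Rightarrow> real" where
  "cf_value G p s1 s2 h =
     (\<Sum>z\<in>{z\<in>terminals G. \<exists>w. z = h @ w}.
        chance_reach G z * (if p = 1 then reach G 2 s2 z else reach G 1 s1 z) *
        cond_reach G p (if p = 1 then s1 else s2) h z *
        (if p = 1 then util G z else - util G z))"

definition cf_vec :: "'a efg \<Rightarrow> nat \<Rightarrow> ('a list set \<Rightarrow> 'a \<Rightarrow> real) \<Rightarrow>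
    ('a list set \<Rightarrow> 'a \<Rightarrow> real) \<Rightarrow> 'a list set \<Rightarrow> 'a \<Rightarrow> real" where
  "cf_vec G p s1 s2 I a = (\<Sum>h\<in>I. cf_value G p s1 s2 (h @ [a]))"

definition rm :: "('a \<Rightarrow> real) \<Rightarrow> 'a set \<Rightarrow> 'a \<Rightarrow> real" where
  "rm x A a = (if \<exists>b\<in>A. 0 < x b then max (x a) 0 / (\<Sum>b\<in>A. max (x b) 0)
               else 1 / real (card A))"

definition cfr_strat :: "'a efg \<Rightarrow> (nat \<Rightarrow> 'a list set \<Rightarrow> 'a \<Rightarrow> real) \<Rightarrow> nat \<Rightarrow> 'a list set \<Rightarrow> 'a \<Rightarrow> real" where
  "cfr_strat G q t I = rm (q t I) (iacts G I)"

definition cfr_plus :: "'a efg \<Rightarrow> (nat \<Rightarrow> 'a list set \<Rightarrow> 'a \<Rightarrow> real) \<Rightarrow> bool" where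
  "cfr_plus G q \<longleftrightarrow>
     (\<forall>I a. q 0 I a = 0) \<and>
     (\<forall>t. \<forall>I\<in>infosets G 1. \<forall>a\<in>iacts G I.
        q (Suc t) I a = max 0 (q t I a
          + cf_vec G 1 (cfr_strat G q t) (cfr_strat G q t) I a
          - (\<Sum>b\<in>iacts G I. cfr_strat G q t I b * cf_vec G 1 (cfr_strat G q t) (cfr_strat G q t) I b))) \<and>
     (\<forall>t. \<forall>I\<in>infosets G 2. \<forall>a\<in>iacts G I.
        q (Suc t) I a = max 0 (q t I a
          + cf_vec G 2 (cfr_strat G q (Suc t)) (cfr_strat G q t) I a
          - (\<Sum>b\<in>iacts G I. cfr_strat G q t I b * cf_vec G 2 (cfr_strat G q (Suc t)) (cfr_strat G q t) I b)))"

definition payoff_range :: "'a efg \<Rightarrow> real" where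
  "payoff_range G = Max {util G y - util G z | y z. y \<in> terminals G \<and> z \<in> terminals G}"

definition max_acts :: "'a efg \<Rightarrow> nat" where
  "max_acts G = Max {card (iacts G I) | I. I \<in> infosets G 1 \<union> infosets G 2}"

end

theory Submission
  imports Defs
begin

text \<open>
  Up to the total weight \<open>t (t + 1) / 2\<close>, the exploitability of the averaged profile is the sum of
  the two players' linearly weighted regrets, player 1's measured against \<open>\<sigma>\<^sub>2\<^sup>n\<close> and player 2's
  against \<open>\<sigma>\<^sub>1\<^sup>n\<^sup>+\<^sup>1\<close> as in the alternating updates, plus the weighted differences
  \<open>u\<^sub>1(\<sigma>\<^sub>1\<^sup>n, \<sigma>\<^sub>2\<^sup>n) - u\<^sub>1(\<sigma>\<^sub>1\<^sup>n\<^sup>+\<^sup>1, \<sigma>\<^sub>2\<^sup>n)\<close>. These differences are at most 0, because regret matching+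
  never makes the next strategy worse against the values it was computed from. By a performance
  difference identity on the game tree and perfect recall, a player's regret is at most the sum
  over its information sets of the weighted regrets of the local regret matching+ learners. Each
  of these is at most \<open>t l \<surd>(k t)\<close>: the weights \<open>n + 1\<close> telescope against the update of the
  regret-like vector \<open>q\<close>, whose squared norm grows by at most \<open>k l\<^sup>2\<close> per step, and the
  instantaneous regrets are bounded by \<open>l\<close> because opponent and chance reach an information set
  with total probability at most 1.
\<close>

section \<open>Path products in the game tree\<close>

definition path_prod :: "('a list \<Rightarrow> 'a \<Rightarrow> real) \<Rightarrow> 'a list \<Rightarrow> 'a list \<Rightarrow> real" where
  "path_prod \<omega> h z = (\<Prod>i\<in>{length h..<length z}. \<omega> (take i z) (z ! i))"

lemma path_prod_self [simp]: "path_prod \<omega> h h = 1"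
  by (simp add: path_prod_def)

lemma path_prod_Cons: "path_prod \<omega> h (h @ a # w) = \<omega> h a * path_prod \<omega> (h @ [a]) (h @ a # w)"
proof -
  have "path_prod \<omega> h (h @ a # w) = \<omega> (take (length h) (h @ a # w)) ((h @ a # w) ! length h) *
     (\<Prod>i\<in>{Suc (length h)..<length (h @ a # w)}. \<omega> (take i (h @ a # w)) ((h @ a # w) ! i))"
    unfolding path_prod_def by (rule prod.atLeast_Suc_lessThan) simp
  then show ?thesis by (simp add: path_prod_def)
qed

lemma path_prod_append: "path_prod \<omega> [] (h @ w) = path_prod \<omega> [] h * path_prod \<omega> h (h @ w)"
proof -
  let ?f = "\<lambda>i. \<omega> (take i (h @ w)) ((h @ w) ! i)"
  have "path_prod \<omega> [] (h @ w) = prod ?f {0..<length h} * prod ?f {length h..<length (h @ w)}"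
    unfolding path_prod_def by (subst prod.atLeastLessThan_concat) auto
  also have "prod ?f {0..<length h} = path_prod \<omega> [] h"
    unfolding path_prod_def by (rule prod.cong) (auto simp: nth_append)
  finally show ?thesis by (simp add: path_prod_def)
qed

lemma path_prod_mult: "path_prod \<omega>1 h z * path_prod \<omega>2 h z = path_prod (\<lambda>x a. \<omega>1 x a * \<omega>2 x a) h z"
  unfolding path_prod_def by (simp add: prod.distrib)

definition terminals_from :: "'a efg \<Rightarrow> 'a list \<Rightarrow> 'a list set" where
  "terminals_from G h = {z \<in> terminals G. \<exists>w. z = h @ w}"

definition nonterms_from :: "'a efg \<Rightarrow> 'a list \<Rightarrow> 'a list set" where
  "nonterms_from G h = {h'. nonterm G h' \<and> (\<exists>w. h' = h @ w)}"

lemma terminals_from_Nil [simp]: "terminals_from G [] = terminals G"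
  by (auto simp: terminals_from_def)

lemma nonterms_from_Nil [simp]: "nonterms_from G [] = {h. nonterm G h}"
  by (auto simp: nonterms_from_def)

definition distrib_weight :: "'a efg \<Rightarrow> ('a list \<Rightarrow> 'a \<Rightarrow> real) \<Rightarrow> bool" where
  "distrib_weight G \<omega> \<longleftrightarrow>
     (\<forall>h. nonterm G h \<longrightarrow> (\<forall>a\<in>acts G h. 0 \<le> \<omega> h a) \<and> sum (\<omega> h) (acts G h) = 1)"

locale game =
  fixes G :: "'a efg"
  assumes wf: "wf_game G"
begin

lemma finite_hist: "finite (hist G)"
  using wf by (simp add: wf_game_def)

lemma Nil_in_hist: "[] \<in> hist G"
  using wf by (simp add: wf_game_def)

lemma take_in_hist: "h \<in> hist G \<Longrightarrow> take i h \<in> hist G"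
  using wf by (simp add: wf_game_def)

lemma prefix_in_hist: "h @ w \<in> hist G \<Longrightarrow> h \<in> hist G"
  using take_in_hist[of "h @ w" "length h"] by simp

lemma extension_in_acts: "h @ a # w \<in> hist G \<Longrightarrow> a \<in> acts G h"
  using prefix_in_hist[of "h @ [a]" w] by (simp add: acts_def)

lemma finite_acts: "finite (acts G h)"
proof -
  have "acts G h \<subseteq> (\<lambda>z. z ! length h) ` hist G"
    unfolding acts_def by (force intro: image_eqI[where x="h @ [_]"])
  then show ?thesis using finite_hist finite_surj by blast
qed

lemma finite_terminals: "finite (terminals G)"
  using finite_hist by (rule finite_subset[rotated]) (auto simp: terminals_def)

lemma finite_terminals_from: "finite (terminals_from G h)"
  using finite_terminals by (rule finite_subset[rotated]) (auto simp: terminals_from_def)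

lemma finite_nonterms_from: "finite (nonterms_from G h)"
  using finite_hist by (rule finite_subset[rotated]) (auto simp: nonterms_from_def nonterm_def)

lemma terminals_from_terminal: "h \<in> terminals G \<Longrightarrow> terminals_from G h = {h}"
proof -
  assume h: "h \<in> terminals G"
  { fix w assume "h @ w \<in> terminals G"
    have "w = []"
    proof (cases w)
      case (Cons b w')
      then have "b \<in> acts G h"
        using \<open>h @ w \<in> terminals G\<close> extension_in_acts by (auto simp: terminals_def)
      then show ?thesis using h by (auto simp: terminals_def)
    qed }
  then show ?thesis using h by (auto simp: terminals_from_def)
qed

lemma terminals_from_nonterm:
  "nonterm G h \<Longrightarrow> terminals_from G h = (\<Union>a\<in>acts G h. terminals_from G (h @ [a]))"
proof -
  assume h: "nonterm G h"
  { fix w assume hw: "h @ w \<in> terminals G"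
    have "\<exists>a\<in>acts G h. \<exists>w'. w = a # w'"
    proof (cases w)
      case Nil then show ?thesis using h hw by (auto simp: terminals_def nonterm_def)
    next
      case (Cons b w')
      then show ?thesis using hw extension_in_acts by (auto simp: terminals_def)
    qed }
  then show ?thesis by (auto simp: terminals_from_def)
qed

lemma sum_terminals_from_nonterm:
  assumes "nonterm G h"
  shows "sum f (terminals_from G h) = (\<Sum>a\<in>acts G h. sum f (terminals_from G (h @ [a])))"
  unfolding terminals_from_nonterm[OF assms]
  by (rule sum.UNION_disjoint[OF finite_acts]) (auto simp: finite_terminals_from, auto simp: terminals_from_def)

lemma nonterms_from_terminal: "h \<in> terminals G \<Longrightarrow> nonterms_from G h = {}"
proof -
  assume h: "h \<in> terminals G"
  have False if "nonterm G (h @ w)" for w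
  proof (cases w)
    case Nil
    then show ?thesis using h that by (auto simp: terminals_def nonterm_def)
  next
    case (Cons b w')
    then have "b \<in> acts G h" using that extension_in_acts by (auto simp: nonterm_def)
    then show ?thesis using h by (auto simp: terminals_def)
  qed
  then show ?thesis by (auto simp: nonterms_from_def)
qed

lemma nonterms_from_nonterm:
  "nonterm G h \<Longrightarrow> nonterms_from G h = insert h (\<Union>a\<in>acts G h. nonterms_from G (h @ [a]))"
proof -
  assume h: "nonterm G h"
  { fix w assume hw: "nonterm G (h @ w)" "w \<noteq> []"
    then obtain b w' where "w = b # w'" by (cases w) auto
    then have "\<exists>a\<in>acts G h. \<exists>w'. w = a # w'"
      using hw extension_in_acts by (auto simp: nonterm_def) }
  then show ?thesis using h by (auto simp: nonterms_from_def)
qed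

lemma sum_nonterms_from_nonterm:
  assumes "nonterm G h"
  shows "sum f (nonterms_from G h) = f h + (\<Sum>a\<in>acts G h. sum f (nonterms_from G (h @ [a])))"
proof -
  have "h \<notin> (\<Union>a\<in>acts G h. nonterms_from G (h @ [a]))"
    by (auto simp: nonterms_from_def)
  moreover have "sum f (\<Union>a\<in>acts G h. nonterms_from G (h @ [a])) =
      (\<Sum>a\<in>acts G h. sum f (nonterms_from G (h @ [a])))"
    by (rule sum.UNION_disjoint[OF finite_acts]) (auto simp: finite_nonterms_from, auto simp: nonterms_from_def)
  ultimately show ?thesis
    unfolding nonterms_from_nonterm[OF assms] by (simp add: finite_nonterms_from finite_acts)
qed

lemma hist_induct [consumes 1, case_names leaf node]:
  assumes "h \<in> hist G"
    and leaf: "\<And>h. h \<in> terminals G \<Longrightarrow> P h"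
    and node: "\<And>h. nonterm G h \<Longrightarrow> (\<And>a. a \<in> acts G h \<Longrightarrow> P (h @ [a])) \<Longrightarrow> P h"
  shows "P h"
proof -
  define M where "M = Max (length ` hist G)"
  have "P h" if "h \<in> hist G" "M - length h = n" for n h
    using that
  proof (induction n arbitrary: h rule: less_induct)
    case (less n h)
    show ?case
    proof (cases "acts G h = {}")
      case True
      then show ?thesis using less leaf by (auto simp: terminals_def)
    next
      case False
      then have nt: "nonterm G h" using less by (auto simp: nonterm_def)
      show ?thesis
      proof (rule node[OF nt])
        fix a assume "a \<in> acts G h"
        then have ha: "h @ [a] \<in> hist G" by (simp add: acts_def)
        then have "length (h @ [a]) \<le> M"
          unfolding M_def by (intro Max_ge) (auto simp: finite_hist intro!: image_eqI[where x="h @ [a]"])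
        then have "M - length (h @ [a]) < n" using less.prems by simp
        then show "P (h @ [a])" using less.IH ha by blast
      qed
    qed
  qed
  then show ?thesis using assms(1) by blast
qed

lemma path_prod_nonneg:
  assumes "z \<in> hist G" and "\<And>h' a. nonterm G h' \<Longrightarrow> a \<in> acts G h' \<Longrightarrow> 0 \<le> \<omega> h' a"
  shows "0 \<le> path_prod \<omega> h z"
  unfolding path_prod_def
proof (rule prod_nonneg)
  fix i assume "i \<in> {length h..<length z}"
  then have "take i z @ [z ! i] \<in> hist G"
    using take_in_hist[OF assms(1), of "Suc i"] by (simp add: take_Suc_conv_app_nth)
  then show "0 \<le> \<omega> (take i z) (z ! i)"
    by (intro assms(2)) (auto simp: nonterm_def acts_def intro: prefix_in_hist)
qed

lemma path_prod_le_1: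
  assumes "z \<in> hist G"
    and "\<And>h' a. nonterm G h' \<Longrightarrow> a \<in> acts G h' \<Longrightarrow> 0 \<le> \<omega> h' a \<and> \<omega> h' a \<le> 1"
  shows "path_prod \<omega> h z \<le> 1"
  unfolding path_prod_def
proof (rule prod_le_1)
  fix i assume "i \<in> {length h..<length z}"
  then have "take i z @ [z ! i] \<in> hist G"
    using take_in_hist[OF assms(1), of "Suc i"] by (simp add: take_Suc_conv_app_nth)
  then show "0 \<le> \<omega> (take i z) (z ! i) \<and> \<omega> (take i z) (z ! i) \<le> 1"
    by (intro assms(2)) (auto simp: nonterm_def acts_def intro: prefix_in_hist)
qed

lemma path_prod_terminals_from_nonneg:
  "distrib_weight G \<omega> \<Longrightarrow> z \<in> terminals_from G h \<Longrightarrow> 0 \<le> path_prod \<omega> h z"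
  by (rule path_prod_nonneg) (auto simp: terminals_from_def terminals_def distrib_weight_def)

lemma sum_path_prod_eq_1:
  assumes "h \<in> hist G" and "distrib_weight G \<omega>"
  shows "sum (path_prod \<omega> h) (terminals_from G h) = 1"
  using assms(1)
proof (induction h rule: hist_induct)
  case (leaf h)
  then show ?case by (simp add: terminals_from_terminal)
next
  case (node h)
  have "sum (path_prod \<omega> h) (terminals_from G h) =
      (\<Sum>a\<in>acts G h. \<omega> h a * sum (path_prod \<omega> (h @ [a])) (terminals_from G (h @ [a])))"
    unfolding sum_terminals_from_nonterm[OF node(1)] sum_distrib_left
    by (intro sum.cong refl) (auto simp: terminals_from_def path_prod_Cons)
  also have "\<dots> = 1"
    using node assms(2) by (simp add: distrib_weight_def)
  finally show ?case .
qed

lemma terminals_from_nonempty: "h \<in> hist G \<Longrightarrow> terminals_from G h \<noteq> {}"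
proof (induction h rule: hist_induct)
  case (leaf h)
  then show ?case by (simp add: terminals_from_terminal)
next
  case (node h)
  then show ?case by (auto simp: terminals_from_nonterm nonterm_def)
qed

lemma path_prod_telescope:
  assumes "h \<in> hist G"
  shows "(\<Sum>z\<in>terminals_from G h. path_prod \<omega> h z * g z) - g h =
    (\<Sum>h'\<in>nonterms_from G h. path_prod \<omega> h h' * ((\<Sum>a\<in>acts G h'. \<omega> h' a * g (h' @ [a])) - g h'))"
  using assms
proof (induction h rule: hist_induct)
  case (leaf h)
  then show ?case by (simp add: terminals_from_terminal nonterms_from_terminal)
next
  case (node h)
  let ?F = "\<lambda>h'. (\<Sum>a\<in>acts G h'. \<omega> h' a * g (h' @ [a])) - g h'"
  let ?T = "\<lambda>h. \<Sum>z\<in>terminals_from G h. path_prod \<omega> h z * g z"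
  let ?N = "\<lambda>h. \<Sum>h'\<in>nonterms_from G h. path_prod \<omega> h h' * ?F h'"
  have T: "?T h = (\<Sum>a\<in>acts G h. \<omega> h a * ?T (h @ [a]))"
    unfolding sum_terminals_from_nonterm[OF node(1)] sum_distrib_left
    by (intro sum.cong refl) (auto simp: terminals_from_def path_prod_Cons)
  have N: "?N h = ?F h + (\<Sum>a\<in>acts G h. \<omega> h a * ?N (h @ [a]))"
    unfolding sum_nonterms_from_nonterm[OF node(1)] sum_distrib_left
    by (intro arg_cong2[where f="(+)"] sum.cong refl) (auto simp: nonterms_from_def path_prod_Cons)
  have "?T (h @ [a]) = g (h @ [a]) + ?N (h @ [a])" if "a \<in> acts G h" for a
    using node(2)[OF that] by linarith
  then have "?T h = (\<Sum>a\<in>acts G h. \<omega> h a * g (h @ [a]) + \<omega> h a * ?N (h @ [a]))"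
    unfolding T by (intro sum.cong) (simp_all add: algebra_simps)
  then show ?case unfolding N by (simp add: sum.distrib)
qed

lemma sum_path_prod_antichain_le_1:
  assumes "distrib_weight G \<omega>" and "finite H" and "H \<subseteq> hist G"
    and antichain: "\<And>h w. h \<in> H \<Longrightarrow> h @ w \<in> H \<Longrightarrow> w = []"
  shows "(\<Sum>h\<in>H. path_prod \<omega> [] h) \<le> 1"
proof -
  have "(\<Sum>h\<in>H. path_prod \<omega> [] h) = (\<Sum>h\<in>H. \<Sum>z\<in>terminals_from G h. path_prod \<omega> [] z)"
  proof (rule sum.cong[OF refl])
    fix h assume "h \<in> H"
    then have "sum (path_prod \<omega> h) (terminals_from G h) = 1"
      using assms(1,3) sum_path_prod_eq_1 by blast
    moreover have "(\<Sum>z\<in>terminals_from G h. path_prod \<omega> [] z) =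
        (\<Sum>z\<in>terminals_from G h. path_prod \<omega> [] h * path_prod \<omega> h z)"
      by (intro sum.cong refl) (auto simp: terminals_from_def path_prod_append)
    ultimately show "path_prod \<omega> [] h = (\<Sum>z\<in>terminals_from G h. path_prod \<omega> [] z)"
      by (simp add: sum_distrib_left[symmetric])
  qed
  also have "\<dots> = (\<Sum>z\<in>(\<Union>h\<in>H. terminals_from G h). path_prod \<omega> [] z)"
  proof (rule sum.UNION_disjoint[symmetric])
    show "\<forall>h1\<in>H. \<forall>h2\<in>H. h1 \<noteq> h2 \<longrightarrow> terminals_from G h1 \<inter> terminals_from G h2 = {}"
      using antichain by (fastforce simp: terminals_from_def append_eq_append_conv2)
  qed (auto simp: assms(2) finite_terminals_from)
  also have "\<dots> \<le> (\<Sum>z\<in>terminals G. path_prod \<omega> [] z)"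
    by (rule sum_mono2[OF finite_terminals])
      (auto simp: terminals_from_def intro: path_prod_terminals_from_nonneg[OF assms(1)])
  also have "\<dots> = 1"
    using sum_path_prod_eq_1[OF Nil_in_hist assms(1)] by simp
  finally show ?thesis .
qed

end

section \<open>Strategies and reach probabilities\<close>

type_synonym 'a strat = "'a list set \<Rightarrow> 'a \<Rightarrow> real"

definition chance_weight :: "'a efg \<Rightarrow> 'a list \<Rightarrow> 'a \<Rightarrow> real" where
  "chance_weight G h a = (if plr G h = 0 then chn G h a else 1)"

definition player_weight :: "'a efg \<Rightarrow> nat \<Rightarrow> 'a strat \<Rightarrow> 'a list \<Rightarrow> 'a \<Rightarrow> real" where
  "player_weight G p s h a = (if plr G h = p then s (iset G h) a else 1)"

definition hist_strategy :: "'a efg \<Rightarrow> nat \<Rightarrow> 'a strat \<Rightarrow> bool" where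
  "hist_strategy G p s \<longleftrightarrow> (\<forall>h. nonterm G h \<and> plr G h = p \<longrightarrow>
      (\<forall>a\<in>acts G h. 0 \<le> s (iset G h) a) \<and> sum (s (iset G h)) (acts G h) = 1)"

lemma cond_reach_eq_path_prod: "cond_reach G p s h z = path_prod (player_weight G p s) h z"
proof -
  have "path_prod (player_weight G p s) h z =
      (\<Prod>i\<in>{i\<in>{length h..<length z}. plr G (take i z) = p}. s (iset G (take i z)) (z ! i))"
    unfolding path_prod_def player_weight_def by (subst prod.inter_filter) auto
  also have "{i\<in>{length h..<length z}. plr G (take i z) = p} =
      {i. length h \<le> i \<and> i < length z \<and> plr G (take i z) = p}"
    by auto
  finally show ?thesis by (simp add: cond_reach_def)
qed

lemma reach_eq_path_prod: "reach G p s z = path_prod (player_weight G p s) [] z"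
  unfolding cond_reach_eq_path_prod[symmetric] by (simp add: cond_reach_def reach_def)

lemma chance_reach_eq_path_prod: "chance_reach G z = path_prod (chance_weight G) [] z"
proof -
  have "path_prod (chance_weight G) [] z =
      (\<Prod>i\<in>{i\<in>{0..<length z}. plr G (take i z) = 0}. chn G (take i z) (z ! i))"
    unfolding path_prod_def chance_weight_def by (subst prod.inter_filter) auto
  also have "{i\<in>{0..<length z}. plr G (take i z) = 0} = {i. i < length z \<and> plr G (take i z) = 0}"
    by auto
  finally show ?thesis by (simp add: chance_reach_def)
qed

lemma own_seq_eq_map_filter:
  "own_seq G p h = map (\<lambda>i. (iset G (take i h), h ! i)) (filter (\<lambda>i. plr G (take i h) = p) [0..<length h])"
proof -
  have "concat (map (\<lambda>i. if P i then [f i] else []) xs) = map f (filter P xs)"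
    for P and f :: "nat \<Rightarrow> 'b" and xs
    by (induction xs) auto
  then show ?thesis unfolding own_seq_def .
qed

lemma reach_eq_prod_own_seq: "reach G p s h = prod_list (map (\<lambda>(J, a). s J a) (own_seq G p h))"
proof -
  let ?is = "filter (\<lambda>i. plr G (take i h) = p) [0..<length h]"
  have "prod_list (map (\<lambda>(J, a). s J a) (own_seq G p h)) =
      prod_list (map (\<lambda>i. s (iset G (take i h)) (h ! i)) ?is)"
    by (simp add: own_seq_eq_map_filter comp_def)
  also have "\<dots> = (\<Prod>i\<in>set ?is. s (iset G (take i h)) (h ! i))"
    by (rule prod.distinct_set_conv_list[symmetric]) simp
  also have "set ?is = {i. i < length h \<and> plr G (take i h) = p}"
    by auto
  finally show ?thesis by (simp add: reach_def)
qed

lemma own_seq_snoc: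
  "own_seq G p (h @ [a]) = own_seq G p h @ (if plr G h = p then [(iset G h, a)] else [])"
  by (simp add: own_seq_eq_map_filter nth_append, intro map_cong filter_cong) auto

lemma own_seq_prefix: "\<exists>r. own_seq G p (h @ w) = own_seq G p h @ r"
proof (induction w rule: rev_induct)
  case (snoc a w)
  then show ?case using own_seq_snoc[of G p "h @ w" a] by force
qed simp

text \<open>By perfect recall the own reach probability is the same at all histories of an information
  set, so it may be evaluated at an arbitrary representative.\<close>

definition iset_rep :: "'a list set \<Rightarrow> 'a list" where
  "iset_rep I = (SOME h. h \<in> I)"

lemma infosets_eq_image: "infosets G p = iset G ` {h. nonterm G h \<and> plr G h = p}"
  unfolding infosets_def by auto

context game
begin

lemma plr_cases: "nonterm G h \<Longrightarrow> plr G h = 0 \<or> plr G h = 1 \<or> plr G h = 2"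
proof -
  have "\<forall>h. nonterm G h \<longrightarrow> plr G h \<in> {0, 1, 2}"
    using wf unfolding wf_game_def by blast
  then show "nonterm G h \<Longrightarrow> plr G h = 0 \<or> plr G h = 1 \<or> plr G h = 2" by blast
qed

lemma chance_distrib:
  "nonterm G h \<Longrightarrow> plr G h = 0 \<Longrightarrow> (\<forall>a\<in>acts G h. 0 \<le> chn G h a) \<and> sum (chn G h) (acts G h) = 1"
proof -
  have "\<forall>h. nonterm G h \<and> plr G h = 0 \<longrightarrow> (\<forall>a\<in>acts G h. 0 \<le> chn G h a) \<and> sum (chn G h) (acts G h) = 1"
    using wf unfolding wf_game_def by blast
  then show "nonterm G h \<Longrightarrow> plr G h = 0 \<Longrightarrow> ?thesis" by blast
qed

lemma iset_self_member:
  assumes "nonterm G h" and "plr G h \<in> {1, 2}"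
  shows "h \<in> iset G h"
    and "h' \<in> iset G h \<Longrightarrow>
      nonterm G h' \<and> plr G h' = plr G h \<and> iset G h' = iset G h \<and> acts G h' = acts G h"
proof -
  have "\<forall>h. nonterm G h \<and> plr G h \<in> {1, 2} \<longrightarrow> h \<in> iset G h \<and>
      (\<forall>h'\<in>iset G h. nonterm G h' \<and> plr G h' = plr G h \<and> iset G h' = iset G h \<and> acts G h' = acts G h)"
    using wf unfolding wf_game_def by blast
  then show "h \<in> iset G h"
    and "h' \<in> iset G h \<Longrightarrow>
      nonterm G h' \<and> plr G h' = plr G h \<and> iset G h' = iset G h \<and> acts G h' = acts G h"
    using assms by blast+
qed

lemma iacts_iset: "nonterm G h \<Longrightarrow> plr G h \<in> {1, 2} \<Longrightarrow> iacts G (iset G h) = acts G h"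
  unfolding iacts_def by (metis (no_types, lifting) iset_self_member SUP_cong UN_constant empty_iff)

lemma infoset_member:
  assumes "p \<in> {1, 2}" and "I \<in> infosets G p" and "h \<in> I"
  shows "nonterm G h \<and> plr G h = p \<and> iset G h = I \<and> acts G h = iacts G I"
proof -
  obtain h0 where h0: "nonterm G h0" "plr G h0 = p" "I = iset G h0"
    using assms(2) by (auto simp: infosets_def)
  then show ?thesis
    using iset_self_member(2)[of h0 h] iacts_iset[of h0] assms by auto
qed

lemma iset_rep_in:
  assumes "p \<in> {1, 2}" and "I \<in> infosets G p"
  shows "iset_rep I \<in> I"
proof -
  obtain h0 where "nonterm G h0" "plr G h0 = p" "I = iset G h0"
    using assms(2) by (auto simp: infosets_def)
  then have "h0 \<in> I" using iset_self_member(1) assms(1) by simp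
  then show ?thesis unfolding iset_rep_def by (rule someI)
qed

lemma own_seq_infoset:
  assumes "p \<in> {1, 2}" and "I \<in> infosets G p" and "h1 \<in> I" and "h2 \<in> I"
  shows "own_seq G p h1 = own_seq G p h2"
proof -
  obtain h0 where h0: "nonterm G h0" "plr G h0 = p" "I = iset G h0"
    using assms(2) by (auto simp: infosets_def)
  have "\<forall>h h'. nonterm G h \<and> plr G h \<in> {1, 2} \<and> h' \<in> iset G h \<longrightarrow>
      own_seq G (plr G h) h = own_seq G (plr G h) h'"
    using wf unfolding wf_game_def by blast
  moreover have "plr G h0 \<in> {1, 2}" using h0(2) assms(1) by simp
  ultimately have "own_seq G p h0 = own_seq G p h" if "h \<in> I" for h
    using h0 that by blast
  then show ?thesis using assms(3,4) by metis
qed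

lemma reach_infoset:
  "p \<in> {1, 2} \<Longrightarrow> I \<in> infosets G p \<Longrightarrow> h1 \<in> I \<Longrightarrow> h2 \<in> I \<Longrightarrow> reach G p s h1 = reach G p s h2"
  unfolding reach_eq_prod_own_seq by (metis own_seq_infoset)

lemma infoset_action_unique:
  assumes "p \<in> {1, 2}" and "I \<in> infosets G p" and "plr G x = p"
    and "x @ b1 # w1 \<in> I" and "x @ b2 # w2 \<in> I"
  shows "b1 = b2"
proof -
  have "own_seq G p ((x @ [b]) @ w) ! length (own_seq G p x) = (iset G x, b)" for b w
    using own_seq_prefix[of G p "x @ [b]" w] by (auto simp: own_seq_snoc assms(3) nth_append)
  from this[of b1 w1] this[of b2 w2] show ?thesis
    using own_seq_infoset[OF assms(1,2,4,5)] by simp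
qed

lemma infoset_antichain:
  assumes "p \<in> {1, 2}" and "I \<in> infosets G p" and "h \<in> I" and "h @ w \<in> I"
  shows "w = []"
proof (rule ccontr)
  assume "w \<noteq> []"
  then obtain b w' where w: "w = (b # w')" by (cases w) auto
  have "plr G h = p" using infoset_member[OF assms(1-3)] by simp
  then have "length (own_seq G p h) < length (own_seq G p ((h @ [b]) @ w'))"
    using own_seq_prefix[of G p "h @ [b]" w'] by (auto simp: own_seq_snoc)
  then show False using own_seq_infoset[OF assms] w by simp
qed

lemma finite_infosets: "finite (infosets G p)"
proof -
  have "finite {h. nonterm G h \<and> plr G h = p}"
    using finite_hist by (rule finite_subset[rotated]) (auto simp: nonterm_def)
  then show ?thesis unfolding infosets_eq_image by simp
qed

lemma finite_infoset: "p \<in> {1, 2} \<Longrightarrow> I \<in> infosets G p \<Longrightarrow> finite I"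
proof -
  assume "p \<in> {1, 2}" "I \<in> infosets G p"
  then have "I \<subseteq> hist G" using infoset_member by (auto simp: nonterm_def)
  then show "finite I" using finite_hist by (rule finite_subset)
qed

lemma infosets_disjoint: "infosets G 1 \<inter> infosets G 2 = {}"
proof -
  have False if "I \<in> infosets G 1" and "I \<in> infosets G 2" for I
    using infoset_member[of 1 I "iset_rep I"] infoset_member[of 2 I "iset_rep I"] iset_rep_in[of 1 I] that
    by simp
  then show ?thesis by blast
qed

lemma finite_nonempty_iacts:
  assumes "p \<in> {1, 2}" and "I \<in> infosets G p"
  shows "finite (iacts G I)" and "iacts G I \<noteq> {}"
  using infoset_member[OF assms iset_rep_in[OF assms]] finite_acts[of "iset_rep I"]
  by (auto simp: nonterm_def)

lemma sum_over_infosets: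
  assumes "p \<in> {1, 2}"
  shows "(\<Sum>h | nonterm G h \<and> plr G h = p. F (iset G h) h) = (\<Sum>I\<in>infosets G p. \<Sum>h\<in>I. F I h)"
proof -
  let ?S = "{h. nonterm G h \<and> plr G h = p}"
  have "finite ?S"
    using finite_hist by (rule finite_subset[rotated]) (auto simp: nonterm_def)
  then have "(\<Sum>h\<in>?S. F (iset G h) h) = (\<Sum>I\<in>iset G ` ?S. \<Sum>h\<in>{x \<in> ?S. iset G x = I}. F (iset G h) h)"
    by (rule sum.image_gen)
  also have "\<dots> = (\<Sum>I\<in>infosets G p. \<Sum>h\<in>I. F I h)"
    unfolding infosets_eq_image[symmetric]
  proof (rule sum.cong[OF refl])
    fix I assume I: "I \<in> infosets G p"
    have "{x \<in> ?S. iset G x = I} = I"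
    proof
      show "{x \<in> ?S. iset G x = I} \<subseteq> I"
        using iset_self_member(1) assms by auto
      show "I \<subseteq> {x \<in> ?S. iset G x = I}"
        using infoset_member[OF assms I] by auto
    qed
    then show "(\<Sum>h\<in>{x \<in> ?S. iset G x = I}. F (iset G h) h) = (\<Sum>h\<in>I. F I h)"
      by (intro sum.cong) auto
  qed
  finally show ?thesis .
qed

lemma strategy_imp_hist_strategy: "p \<in> {1, 2} \<Longrightarrow> strategy G p s \<Longrightarrow> hist_strategy G p s"
  unfolding strategy_def hist_strategy_def infosets_def by (auto simp: iacts_iset)

lemma hist_strategy_le_1:
  assumes "hist_strategy G p s" and "nonterm G h" and "plr G h = p" and "a \<in> acts G h"
  shows "s (iset G h) a \<le> 1"
proof -
  have "(\<forall>a\<in>acts G h. 0 \<le> s (iset G h) a) \<and> sum (s (iset G h)) (acts G h) = 1"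
    using assms unfolding hist_strategy_def by blast
  moreover have "s (iset G h) a \<le> sum (s (iset G h)) (acts G h)"
    by (rule member_le_sum[OF assms(4)]) (use calculation finite_acts in auto)
  ultimately show ?thesis by simp
qed

lemma reach_nonneg_le_1:
  assumes "hist_strategy G p s" and "h \<in> hist G"
  shows "0 \<le> reach G p s h" and "reach G p s h \<le> 1"
proof -
  have "0 \<le> player_weight G p s h' a \<and> player_weight G p s h' a \<le> 1"
    if "nonterm G h'" "a \<in> acts G h'" for h' a
    using assms(1) that hist_strategy_le_1 unfolding hist_strategy_def player_weight_def by auto
  then show "0 \<le> reach G p s h" "reach G p s h \<le> 1"
    unfolding reach_eq_path_prod by (blast intro: path_prod_nonneg path_prod_le_1 assms(2))+
qed

end

section \<open>Counterfactual values and the regret decomposition\<close>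

definition player_sign :: "nat \<Rightarrow> real" where
  "player_sign p = (if p = 1 then 1 else -1)"

text \<open>Unlike in \<open>cf_value\<close>, the own strategy comes first and the opponent's second, so that
  both players are treated uniformly.\<close>

definition cfv :: "'a efg \<Rightarrow> nat \<Rightarrow> 'a strat \<Rightarrow> 'a strat \<Rightarrow> 'a list \<Rightarrow> real" where
  "cfv G p own oth h = (\<Sum>z\<in>terminals_from G h.
     chance_reach G z * reach G (3 - p) oth z * cond_reach G p own h z * (player_sign p * util G z))"

definition cfv_vec :: "'a efg \<Rightarrow> nat \<Rightarrow> 'a strat \<Rightarrow> 'a strat \<Rightarrow> 'a list set \<Rightarrow> 'a \<Rightarrow> real" where
  "cfv_vec G p own oth I a = (\<Sum>h\<in>I. cfv G p own oth (h @ [a]))"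

definition inst_regret :: "'a efg \<Rightarrow> nat \<Rightarrow> 'a strat \<Rightarrow> 'a strat \<Rightarrow> 'a list set \<Rightarrow> 'a \<Rightarrow> real" where
  "inst_regret G p \<sigma> oth I a =
     cfv_vec G p \<sigma> oth I a - (\<Sum>b\<in>iacts G I. \<sigma> I b * cfv_vec G p \<sigma> oth I b)"

lemma cf_vec_1_eq: "cf_vec G 1 s1 s2 = cfv_vec G 1 s1 s2"
  by (simp add: fun_eq_iff cf_vec_def cfv_vec_def cf_value_def cfv_def terminals_from_def player_sign_def)

lemma cf_vec_2_eq: "cf_vec G 2 s1 s2 = cfv_vec G 2 s2 s1"
  by (simp add: fun_eq_iff cf_vec_def cfv_vec_def cf_value_def cfv_def terminals_from_def player_sign_def)

lemma sum_diff_mult_eq_sum_mult_regret: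
  fixes s \<sigma> v :: "'b \<Rightarrow> real"
  assumes "sum s A = 1"
  shows "(\<Sum>a\<in>A. (s a - \<sigma> a) * v a) = (\<Sum>a\<in>A. s a * (v a - (\<Sum>b\<in>A. \<sigma> b * v b)))"
proof -
  have "(\<Sum>a\<in>A. s a * (v a - (\<Sum>b\<in>A. \<sigma> b * v b))) =
      (\<Sum>a\<in>A. s a * v a) - sum s A * (\<Sum>b\<in>A. \<sigma> b * v b)"
    by (simp add: algebra_simps sum_subtractf sum_distrib_right)
  then show ?thesis
    using assms by (simp add: algebra_simps sum_subtractf)
qed

context game
begin

lemma cfv_terminal:
  "z \<in> terminals G \<Longrightarrow>
    cfv G p own oth z = chance_reach G z * reach G (3 - p) oth z * (player_sign p * util G z)"
  by (simp add: cfv_def terminals_from_terminal cond_reach_eq_path_prod)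

lemma cfv_nonterm:
  "nonterm G h \<Longrightarrow> cfv G p own oth h = (\<Sum>a\<in>acts G h. player_weight G p own h a * cfv G p own oth (h @ [a]))"
  unfolding cfv_def sum_terminals_from_nonterm sum_distrib_left
  by (intro sum.cong refl) (auto simp: terminals_from_def cond_reach_eq_path_prod path_prod_Cons)

lemma cfv_Nil:
  "cfv G p own oth [] =
    (\<Sum>z\<in>terminals G. chance_reach G z * reach G (3 - p) oth z * reach G p own z * (player_sign p * util G z))"
  by (simp add: cfv_def cond_reach_eq_path_prod reach_eq_path_prod)

lemma exp_util_eq_cfv: "exp_util G (reach G 1 s1) (reach G 2 s2) = cfv G 1 s1 s2 []"
  unfolding cfv_Nil exp_util_def by (simp add: player_sign_def mult_ac)

lemma cfv_2_Nil: "cfv G 2 s2 s1 [] = - cfv G 1 s1 s2 []"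
  unfolding cfv_Nil by (simp add: player_sign_def mult_ac sum_negf[symmetric])

text \<open>A performance difference identity: telescope the values of \<open>\<sigma>\<close> along the paths of \<open>s\<close>.\<close>

lemma cfv_Nil_diff:
  "cfv G p s oth [] - cfv G p \<sigma> oth [] =
    (\<Sum>h | nonterm G h \<and> plr G h = p. reach G p s h *
       (\<Sum>a\<in>acts G h. (s (iset G h) a - \<sigma> (iset G h) a) * cfv G p \<sigma> oth (h @ [a])))"
proof -
  let ?\<omega> = "player_weight G p s" and ?g = "cfv G p \<sigma> oth"
  have "cfv G p s oth [] = (\<Sum>z\<in>terminals_from G []. path_prod ?\<omega> [] z * ?g z)"
    unfolding cfv_Nil terminals_from_Nil
    by (intro sum.cong refl) (simp add: cfv_terminal reach_eq_path_prod mult_ac)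
  also have "\<dots> - ?g [] =
      (\<Sum>h\<in>nonterms_from G []. path_prod ?\<omega> [] h * ((\<Sum>a\<in>acts G h. ?\<omega> h a * ?g (h @ [a])) - ?g h))"
    by (rule path_prod_telescope[OF Nil_in_hist])
  also have "\<dots> = (\<Sum>h | nonterm G h. if plr G h = p then reach G p s h *
       (\<Sum>a\<in>acts G h. (s (iset G h) a - \<sigma> (iset G h) a) * ?g (h @ [a])) else 0)"
  proof (intro sum.cong, simp)
    fix h assume "h \<in> {h. nonterm G h}"
    then have "?g h = (\<Sum>a\<in>acts G h. player_weight G p \<sigma> h a * ?g (h @ [a]))"
      by (simp add: cfv_nonterm)
    then show "path_prod ?\<omega> [] h * ((\<Sum>a\<in>acts G h. ?\<omega> h a * ?g (h @ [a])) - ?g h) =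
      (if plr G h = p then reach G p s h *
         (\<Sum>a\<in>acts G h. (s (iset G h) a - \<sigma> (iset G h) a) * ?g (h @ [a])) else 0)"
      by (simp add: player_weight_def reach_eq_path_prod sum_subtractf left_diff_distrib)
  qed
  finally show ?thesis
    using finite_nonterms_from[of "[]"] by (simp add: sum.inter_filter[symmetric])
qed

lemma cfv_Nil_diff_eq_sum_inst_regret:
  assumes p: "p \<in> {1, 2}" and s: "hist_strategy G p s"
  shows "cfv G p s oth [] - cfv G p \<sigma> oth [] =
    (\<Sum>I\<in>infosets G p. reach G p s (iset_rep I) * (\<Sum>a\<in>iacts G I. s I a * inst_regret G p \<sigma> oth I a))"
  unfolding cfv_Nil_diff sum_over_infosets[OF p, of "\<lambda>I h. reach G p s h *
    (\<Sum>a\<in>acts G h. (s I a - \<sigma> I a) * cfv G p \<sigma> oth (h @ [a]))"]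
proof (rule sum.cong[OF refl])
  fix I assume I: "I \<in> infosets G p"
  note rep = infoset_member[OF p I iset_rep_in[OF p I]]
  have "(\<Sum>h\<in>I. reach G p s h * (\<Sum>a\<in>acts G h. (s I a - \<sigma> I a) * cfv G p \<sigma> oth (h @ [a]))) =
      (\<Sum>h\<in>I. reach G p s (iset_rep I) * (\<Sum>a\<in>iacts G I. (s I a - \<sigma> I a) * cfv G p \<sigma> oth (h @ [a])))"
    using infoset_member[OF p I] reach_infoset[OF p I _ iset_rep_in[OF p I]] by (intro sum.cong) auto
  also have "\<dots> = reach G p s (iset_rep I) * (\<Sum>a\<in>iacts G I. (s I a - \<sigma> I a) * cfv_vec G p \<sigma> oth I a)"
    unfolding cfv_vec_def by (simp add: sum_distrib_left sum.swap[of _ I])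
  also have "\<dots> = reach G p s (iset_rep I) * (\<Sum>a\<in>iacts G I. s I a * inst_regret G p \<sigma> oth I a)"
    using s rep unfolding hist_strategy_def inst_regret_def
    by (subst sum_diff_mult_eq_sum_mult_regret) auto
  finally show "(\<Sum>h\<in>I. reach G p s h * (\<Sum>a\<in>acts G h. (s I a - \<sigma> I a) * cfv G p \<sigma> oth (h @ [a]))) =
      reach G p s (iset_rep I) * (\<Sum>a\<in>iacts G I. s I a * inst_regret G p \<sigma> oth I a)" .
qed

end

section \<open>Bounding the instantaneous regret\<close>

definition opp_reach :: "'a efg \<Rightarrow> nat \<Rightarrow> 'a strat \<Rightarrow> 'a list \<Rightarrow> real" where
  "opp_reach G p oth h = chance_reach G h * reach G (3 - p) oth h"

definition play_weight :: "'a efg \<Rightarrow> nat \<Rightarrow> 'a strat \<Rightarrow> 'a strat \<Rightarrow> 'a list \<Rightarrow> 'a \<Rightarrow> real" where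
  "play_weight G p own oth h a =
     chance_weight G h a * player_weight G (3 - p) oth h a * player_weight G p own h a"

definition cond_value :: "'a efg \<Rightarrow> nat \<Rightarrow> 'a strat \<Rightarrow> 'a strat \<Rightarrow> 'a list \<Rightarrow> real" where
  "cond_value G p own oth x =
     (\<Sum>z\<in>terminals_from G x. path_prod (play_weight G p own oth) x z * (player_sign p * util G z))"

lemma cfv_eq_opp_reach_mult_cond_value: "cfv G p own oth x = opp_reach G p oth x * cond_value G p own oth x"
proof -
  have "cfv G p own oth x = (\<Sum>z\<in>terminals_from G x.
      opp_reach G p oth x * (path_prod (play_weight G p own oth) x z * (player_sign p * util G z)))"
    unfolding cfv_def
  proof (rule sum.cong[OF refl])
    fix z assume "z \<in> terminals_from G x"
    then obtain w where z: "z = x @ w" by (auto simp: terminals_from_def)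
    show "chance_reach G z * reach G (3 - p) oth z * cond_reach G p own x z * (player_sign p * util G z) =
        opp_reach G p oth x * (path_prod (play_weight G p own oth) x z * (player_sign p * util G z))"
      unfolding opp_reach_def chance_reach_eq_path_prod reach_eq_path_prod cond_reach_eq_path_prod z
        path_prod_append[of _ x w] play_weight_def path_prod_mult[symmetric]
      by (simp add: algebra_simps)
  qed
  then show ?thesis by (simp add: cond_value_def sum_distrib_left)
qed

lemma opp_reach_snoc_own:
  "plr G h = p \<Longrightarrow> p \<in> {1, 2} \<Longrightarrow> opp_reach G p oth (h @ [b]) = opp_reach G p oth h"
  unfolding opp_reach_def chance_reach_eq_path_prod reach_eq_path_prod path_prod_append
    path_prod_Cons[of _ h b "[]", simplified]
  by (auto simp: chance_weight_def player_weight_def)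

lemma abs_expectation_diff_le:
  fixes P Q f :: "'b \<Rightarrow> real"
  assumes "\<forall>x\<in>A. 0 \<le> P x" and "\<forall>y\<in>B. 0 \<le> Q y" and "sum P A = 1" and "sum Q B = 1"
    and "\<And>x y. x \<in> A \<Longrightarrow> y \<in> B \<Longrightarrow> \<bar>f x - f y\<bar> \<le> L"
  shows "\<bar>(\<Sum>x\<in>A. P x * f x) - (\<Sum>y\<in>B. Q y * f y)\<bar> \<le> L"
proof -
  have "(\<Sum>x\<in>A. \<Sum>y\<in>B. P x * Q y * (f x - f y)) =
      (\<Sum>x\<in>A. P x * f x * sum Q B) - sum P A * (\<Sum>y\<in>B. Q y * f y)"
    by (simp add: sum_subtractf right_diff_distrib sum_distrib_left sum_distrib_right mult_ac)
      (rule sum.swap)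
  then have "(\<Sum>x\<in>A. P x * f x) - (\<Sum>y\<in>B. Q y * f y) = (\<Sum>x\<in>A. \<Sum>y\<in>B. P x * Q y * (f x - f y))"
    using assms(3,4) by simp
  also have "\<bar>\<dots>\<bar> \<le> (\<Sum>x\<in>A. \<Sum>y\<in>B. P x * Q y * L)"
    using assms(1,2,5)
    by (intro order_trans[OF sum_abs] sum_mono order_trans[OF sum_abs])
      (simp add: abs_mult mult_left_mono)
  also have "\<dots> = sum P A * sum Q B * L"
    by (simp add: sum_product sum_distrib_right)
      (simp add: sum_distrib_left mult_ac)
  also have "\<dots> = L"
    using assms(3,4) by simp
  finally show ?thesis .
qed

text \<open>By perfect recall all histories of an own information set \<open>I\<close> require the same own
  actions, so the player can steer play deterministically towards \<open>I\<close>; off \<open>I\<close> it plays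
  uniformly. Under this steering the histories of \<open>I\<close> are reached with exactly the opponent's
  and chance's reach probability.\<close>

definition steer_weight :: "'a efg \<Rightarrow> 'a list set \<Rightarrow> 'a list \<Rightarrow> 'a \<Rightarrow> real" where
  "steer_weight G I h b =
     (if \<exists>b' w. h @ b' # w \<in> I then (if \<exists>w. h @ b # w \<in> I then 1 else 0)
      else 1 / real (card (acts G h)))"

lemma steer_weight_along:
  assumes "h \<in> I" and "i < length h"
  shows "steer_weight G I (take i h) (h ! i) = 1"
proof -
  from assms(1) have "take i h @ h ! i # drop (Suc i) h \<in> I"
    by (simp only: id_take_nth_drop[OF assms(2), symmetric])
  then show ?thesis by (auto simp: steer_weight_def)
qed

context game
begin

lemma cond_value_nonterm:
  "nonterm G h \<Longrightarrow>
    cond_value G p own oth h = (\<Sum>b\<in>acts G h. play_weight G p own oth h b * cond_value G p own oth (h @ [b]))"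
  unfolding cond_value_def sum_terminals_from_nonterm sum_distrib_left
  by (intro sum.cong refl) (auto simp: terminals_from_def path_prod_Cons)

lemma distrib_weight_own_weight:
  assumes p: "p \<in> {1, 2}" and oth: "hist_strategy G (3 - p) oth"
    and \<omega>: "\<And>h. nonterm G h \<Longrightarrow> plr G h = p \<Longrightarrow> (\<forall>a\<in>acts G h. 0 \<le> \<omega> h a) \<and> sum (\<omega> h) (acts G h) = 1"
  shows "distrib_weight G (\<lambda>h a. chance_weight G h a * player_weight G (3 - p) oth h a *
    (if plr G h = p then \<omega> h a else 1))"
  unfolding distrib_weight_def
proof (intro allI impI)
  fix h assume h: "nonterm G h"
  then have "plr G h = 0 \<or> plr G h = p \<or> plr G h = 3 - p" using plr_cases[OF h] p by auto
  moreover have "p \<noteq> 0" "3 - p \<noteq> 0" "3 - p \<noteq> p" using p by auto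
  ultimately show "(\<forall>a\<in>acts G h. 0 \<le> chance_weight G h a * player_weight G (3 - p) oth h a *
      (if plr G h = p then \<omega> h a else 1)) \<and>
    (\<Sum>a\<in>acts G h. chance_weight G h a * player_weight G (3 - p) oth h a *
      (if plr G h = p then \<omega> h a else 1)) = 1"
    using chance_distrib[OF h] oth h \<omega>[OF h]
    unfolding hist_strategy_def chance_weight_def player_weight_def by auto
qed

lemma play_weight_distrib:
  assumes "p \<in> {1, 2}" and "hist_strategy G p own" and "hist_strategy G (3 - p) oth"
  shows "distrib_weight G (play_weight G p own oth)"
proof -
  have "play_weight G p own oth = (\<lambda>h a. chance_weight G h a * player_weight G (3 - p) oth h a *
      (if plr G h = p then own (iset G h) a else 1))"
    by (simp add: fun_eq_iff play_weight_def player_weight_def)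
  then show ?thesis
    using assms(2) by (simp add: distrib_weight_own_weight[OF assms(1,3)] hist_strategy_def)
qed

lemma payoff_range_ge: "y \<in> terminals G \<Longrightarrow> z \<in> terminals G \<Longrightarrow> util G y - util G z \<le> payoff_range G"
  unfolding payoff_range_def
  by (rule Max_ge) (auto simp: finite_image_set2 finite_terminals)

lemma abs_cond_value_diff_le:
  assumes "p \<in> {1, 2}" and "hist_strategy G p own" and "hist_strategy G (3 - p) oth"
    and "x \<in> hist G" and "y \<in> hist G"
  shows "\<bar>cond_value G p own oth x - cond_value G p own oth y\<bar> \<le> payoff_range G"
  unfolding cond_value_def
proof (rule abs_expectation_diff_le)
  note distrib = play_weight_distrib[OF assms(1-3)]
  show "sum (path_prod (play_weight G p own oth) x) (terminals_from G x) = 1"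
    and "sum (path_prod (play_weight G p own oth) y) (terminals_from G y) = 1"
    using assms(4,5) distrib by (blast intro: sum_path_prod_eq_1)+
  show "\<forall>z\<in>terminals_from G x. 0 \<le> path_prod (play_weight G p own oth) x z"
    and "\<forall>z\<in>terminals_from G y. 0 \<le> path_prod (play_weight G p own oth) y z"
    using distrib by (blast intro: path_prod_terminals_from_nonneg)+
  fix z z' assume "z \<in> terminals_from G x" and "z' \<in> terminals_from G y"
  then have "util G z - util G z' \<le> payoff_range G" and "util G z' - util G z \<le> payoff_range G"
    by (auto simp: terminals_from_def intro: payoff_range_ge)
  then show "\<bar>player_sign p * util G z - player_sign p * util G z'\<bar> \<le> payoff_range G"
    by (auto simp: player_sign_def)
qed

lemma steer_weight_distrib:
  assumes p: "p \<in> {1, 2}" and I: "I \<in> infosets G p" and h: "nonterm G h" "plr G h = p"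
  shows "(\<forall>b\<in>acts G h. 0 \<le> steer_weight G I h b) \<and> sum (steer_weight G I h) (acts G h) = 1"
proof (cases "\<exists>b' w. h @ b' # w \<in> I")
  case True
  then obtain b' w where b': "h @ b' # w \<in> I" by blast
  then have "h @ b' # w \<in> hist G"
    using infoset_member[OF p I b'] by (simp add: nonterm_def)
  then have "b' \<in> acts G h" by (rule extension_in_acts)
  moreover have "(\<exists>w. h @ b # w \<in> I) \<longleftrightarrow> b = b'" for b
    using infoset_action_unique[OF p I h(2) _ b'] b' by blast
  then have "steer_weight G I h b = (if b = b' then 1 else 0)" for b
    using True by (simp add: steer_weight_def)
  ultimately show ?thesis using finite_acts by (simp add: sum.delta)
next
  case False
  then show ?thesis using h finite_acts[of h] by (auto simp: steer_weight_def nonterm_def)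
qed

lemma sum_opp_reach_infoset_le_1:
  assumes p: "p \<in> {1, 2}" and I: "I \<in> infosets G p" and oth: "hist_strategy G (3 - p) oth"
  shows "(\<Sum>h\<in>I. opp_reach G p oth h) \<le> 1"
proof -
  let ?W = "\<lambda>h a. chance_weight G h a * player_weight G (3 - p) oth h a *
    (if plr G h = p then steer_weight G I h a else 1)"
  have W: "distrib_weight G ?W"
    using distrib_weight_own_weight[OF p oth steer_weight_distrib[OF p I]] .
  have "path_prod ?W [] h = opp_reach G p oth h" if h: "h \<in> I" for h
  proof -
    have "path_prod (\<lambda>h' b. if plr G h' = p then steer_weight G I h' b else 1) [] h = 1"
      unfolding path_prod_def using steer_weight_along[OF h] by (intro prod.neutral) auto
    then show ?thesis
      unfolding path_prod_mult[symmetric] opp_reach_def chance_reach_eq_path_prod reach_eq_path_prod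
      by simp
  qed
  then have "(\<Sum>h\<in>I. opp_reach G p oth h) = (\<Sum>h\<in>I. path_prod ?W [] h)"
    by simp
  also have "\<dots> \<le> 1"
  proof (rule sum_path_prod_antichain_le_1[OF W finite_infoset[OF p I]])
    show "I \<subseteq> hist G"
      using infoset_member[OF p I] by (auto simp: nonterm_def)
  qed (rule infoset_antichain[OF p I])
  finally show ?thesis .
qed

lemma payoff_range_nonneg: "0 \<le> payoff_range G"
proof -
  obtain z where "z \<in> terminals G"
    using terminals_from_nonempty[OF Nil_in_hist] by auto
  then show ?thesis using payoff_range_ge[of z z] by simp
qed

lemma opp_reach_nonneg:
  assumes "hist_strategy G (3 - p) oth" and "h \<in> hist G"
  shows "0 \<le> opp_reach G p oth h"
proof -
  have "0 \<le> chance_reach G h"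
    unfolding chance_reach_eq_path_prod
    by (rule path_prod_nonneg[OF assms(2)]) (use chance_distrib in \<open>auto simp: chance_weight_def\<close>)
  then show ?thesis
    unfolding opp_reach_def using reach_nonneg_le_1(1)[OF assms] by simp
qed

lemma inst_regret_eq_sum_cond_value_diff:
  assumes p: "p \<in> {1, 2}" and I: "I \<in> infosets G p"
  shows "inst_regret G p \<sigma> oth I a =
    (\<Sum>h\<in>I. opp_reach G p oth h * (cond_value G p \<sigma> oth (h @ [a]) - cond_value G p \<sigma> oth h))"
proof -
  let ?E = "cond_value G p \<sigma> oth" and ?r = "opp_reach G p oth"
  have cfv_snoc: "cfv G p \<sigma> oth (h @ [b]) = ?r h * ?E (h @ [b])" if "h \<in> I" for h b
    using infoset_member[OF p I that] p
    by (simp add: cfv_eq_opp_reach_mult_cond_value opp_reach_snoc_own)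
  have E: "?E h = (\<Sum>b\<in>iacts G I. \<sigma> I b * ?E (h @ [b]))" if "h \<in> I" for h
    using infoset_member[OF p I that] p
    by (auto simp: cond_value_nonterm play_weight_def chance_weight_def player_weight_def)
  have "inst_regret G p \<sigma> oth I a =
      (\<Sum>h\<in>I. ?r h * ?E (h @ [a])) - (\<Sum>h\<in>I. ?r h * (\<Sum>b\<in>iacts G I. \<sigma> I b * ?E (h @ [b])))"
    unfolding inst_regret_def cfv_vec_def using cfv_snoc
    by (simp add: sum_distrib_left sum.swap[of _ "iacts G I" I] mult_ac)
  also have "\<dots> = (\<Sum>h\<in>I. ?r h * (?E (h @ [a]) - ?E h))"
    using E by (simp add: sum_subtractf[symmetric] right_diff_distrib)
  finally show ?thesis .
qed

lemma abs_inst_regret_le: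
  assumes p: "p \<in> {1, 2}" and \<sigma>: "hist_strategy G p \<sigma>" and oth: "hist_strategy G (3 - p) oth"
    and I: "I \<in> infosets G p" and a: "a \<in> iacts G I"
  shows "\<bar>inst_regret G p \<sigma> oth I a\<bar> \<le> payoff_range G"
proof -
  let ?E = "cond_value G p \<sigma> oth" and ?r = "opp_reach G p oth"
  have hist: "h \<in> hist G" and hist_a: "h @ [a] \<in> hist G" if "h \<in> I" for h
    using infoset_member[OF p I that] a by (auto simp: nonterm_def acts_def)
  have "\<bar>\<Sum>h\<in>I. ?r h * (?E (h @ [a]) - ?E h)\<bar> \<le> (\<Sum>h\<in>I. ?r h * payoff_range G)"
  proof (rule order_trans[OF sum_abs sum_mono])
    fix h assume "h \<in> I"
    then show "\<bar>?r h * (?E (h @ [a]) - ?E h)\<bar> \<le> ?r h * payoff_range G"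
      using abs_cond_value_diff_le[OF p \<sigma> oth hist_a hist] opp_reach_nonneg[OF oth hist]
      by (simp add: abs_mult mult_left_mono)
  qed
  also have "\<dots> = (\<Sum>h\<in>I. ?r h) * payoff_range G"
    by (simp add: sum_distrib_right)
  also have "\<dots> \<le> payoff_range G"
    using mult_right_mono[OF sum_opp_reach_infoset_le_1[OF p I oth] payoff_range_nonneg] by simp
  finally show ?thesis
    unfolding inst_regret_eq_sum_cond_value_diff[OF p I] .
qed

end

section \<open>Regret matching+\<close>

lemma rm_distrib:
  assumes "finite A" and "A \<noteq> {}"
  shows "\<forall>a\<in>A. 0 \<le> rm x A a" and "sum (rm x A) A = 1"
proof -
  have pos: "0 < (\<Sum>c\<in>A. max (x c) 0)" if "b \<in> A" "0 < x b" for b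
    using member_le_sum[OF that(1), of "\<lambda>c. max (x c) 0"] assms(1) that(2) by auto
  show "\<forall>a\<in>A. 0 \<le> rm x A a"
    by (auto simp: rm_def intro!: divide_nonneg_nonneg sum_nonneg)
  show "sum (rm x A) A = 1"
  proof (cases "\<exists>b\<in>A. 0 < x b")
    case True
    then have "sum (rm x A) A = (\<Sum>a\<in>A. max (x a) 0 / (\<Sum>c\<in>A. max (x c) 0))"
      by (simp add: rm_def)
    also have "\<dots> = (\<Sum>a\<in>A. max (x a) 0) / (\<Sum>c\<in>A. max (x c) 0)"
      by (rule sum_divide_distrib[symmetric])
    also have "\<dots> = 1"
      using True pos by auto
    finally show ?thesis .
  next
    case False
    then show ?thesis using assms by (simp add: rm_def)
  qed
qed

lemma sum_mult_sum_rm: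
  assumes "finite A" and "\<forall>a\<in>A. 0 \<le> x a"
  shows "(\<Sum>a\<in>A. x a) * (\<Sum>a\<in>A. rm x A a * v a) = (\<Sum>a\<in>A. x a * v a)"
proof (cases "\<exists>b\<in>A. 0 < x b")
  case True
  then obtain b where b: "b \<in> A" "0 < x b" by auto
  then have "0 < (\<Sum>c\<in>A. x c)"
    using member_le_sum[OF b(1), of x] assms by auto
  moreover have "(\<Sum>a\<in>A. rm x A a * v a) = (\<Sum>a\<in>A. x a * v a) / (\<Sum>c\<in>A. x c)"
    using True assms(2) by (simp add: rm_def sum_divide_distrib)
  ultimately show ?thesis by simp
next
  case False
  then have "\<forall>a\<in>A. x a = 0" using assms(2) by force
  then show ?thesis by simp
qed

locale rm_plus =
  fixes A :: "'a set" and q v :: "nat \<Rightarrow> 'a \<Rightarrow> real"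
  assumes finite_A: "finite A" and A_nonempty: "A \<noteq> {}"
    and q_0: "a \<in> A \<Longrightarrow> q 0 a = 0"
    and q_Suc: "a \<in> A \<Longrightarrow> q (Suc n) a = max 0 (q n a + v n a - (\<Sum>b\<in>A. rm (q n) A b * v n b))"
begin

definition regret :: "nat \<Rightarrow> 'a \<Rightarrow> real" where
  "regret n a = v n a - (\<Sum>b\<in>A. rm (q n) A b * v n b)"

lemma q_Suc_regret: "a \<in> A \<Longrightarrow> q (Suc n) a = max 0 (q n a + regret n a)"
  by (simp add: q_Suc regret_def)

lemma q_nonneg: "a \<in> A \<Longrightarrow> 0 \<le> q n a"
  by (cases n) (simp_all add: q_0 q_Suc_regret)

lemma sum_q_mult_regret: "(\<Sum>a\<in>A. q n a * regret n a) = 0"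
proof -
  have "(\<Sum>a\<in>A. q n a * regret n a) =
      (\<Sum>a\<in>A. q n a * v n a) - (\<Sum>a\<in>A. q n a) * (\<Sum>b\<in>A. rm (q n) A b * v n b)"
    by (simp add: regret_def right_diff_distrib sum_subtractf sum_distrib_right)
  then show ?thesis
    using sum_mult_sum_rm[OF finite_A, of "q n" "v n"] q_nonneg by simp
qed

text \<open>Truncation at \<open>0\<close> does not increase the squared norm, and the cross term vanishes.\<close>

lemma sum_q_squared_le: "(\<Sum>a\<in>A. (q n a)\<^sup>2) \<le> (\<Sum>m<n. \<Sum>a\<in>A. (regret m a)\<^sup>2)"
proof (induction n)
  case 0
  then show ?case by (simp add: q_0)
next
  case (Suc n)
  have "(\<Sum>a\<in>A. (q (Suc n) a)\<^sup>2) \<le> (\<Sum>a\<in>A. (q n a + regret n a)\<^sup>2)"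
    by (intro sum_mono) (simp add: q_Suc_regret max_def)
  also have "\<dots> = (\<Sum>a\<in>A. (q n a)\<^sup>2) + 2 * (\<Sum>a\<in>A. q n a * regret n a) + (\<Sum>a\<in>A. (regret n a)\<^sup>2)"
    by (simp add: power2_sum sum.distrib sum_distrib_left algebra_simps)
  also have "\<dots> \<le> (\<Sum>m<Suc n. \<Sum>a\<in>A. (regret m a)\<^sup>2)"
    using Suc sum_q_mult_regret[of n] by simp
  finally show ?case .
qed

lemma q_le:
  assumes bound: "\<And>n a. a \<in> A \<Longrightarrow> \<bar>regret n a\<bar> \<le> L" and a: "a \<in> A"
  shows "q N a \<le> L * sqrt (real (card A) * real N)"
proof -
  have L: "0 \<le> L" using bound[of _ 0] A_nonempty by force
  have regret_sq: "(regret m b)\<^sup>2 \<le> L\<^sup>2" if "b \<in> A" for m b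
    using bound[OF that, of m] by (metis abs_ge_zero power2_abs power_mono)
  have "(q N a)\<^sup>2 \<le> (\<Sum>a\<in>A. (q N a)\<^sup>2)"
    by (rule member_le_sum[OF a]) (auto simp: finite_A)
  also have "\<dots> \<le> (\<Sum>m<N. \<Sum>a\<in>A. (regret m a)\<^sup>2)"
    by (rule sum_q_squared_le)
  also have "\<dots> \<le> (\<Sum>m<N. \<Sum>a\<in>A. L\<^sup>2)"
    by (intro sum_mono regret_sq)
  also have "\<dots> = (L * sqrt (real (card A) * real N))\<^sup>2"
    using L by (simp add: power_mult_distrib)
  finally show ?thesis
    by (rule power2_le_imp_le) (simp add: L)
qed

text \<open>The linear weights \<open>n + 1\<close> telescope against the recursion for \<open>q\<close>.\<close>

lemma weighted_regret_le_q: "a \<in> A \<Longrightarrow> (\<Sum>n<N. real (n + 1) * regret n a) \<le> real N * q N a"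
proof (induction N)
  case (Suc N)
  then have "(\<Sum>n<Suc N. real (n + 1) * regret n a) \<le> real N * q N a + real (N + 1) * regret N a"
    by simp
  also have "\<dots> \<le> real (N + 1) * (q N a + regret N a)"
    using q_nonneg[OF Suc.prems, of N] by (simp add: algebra_simps)
  also have "\<dots> \<le> real (Suc N) * q (Suc N) a"
    by (simp add: q_Suc_regret[OF Suc.prems] mult_left_mono)
  finally show ?case .
qed simp

lemma weighted_regret_le:
  assumes "\<And>n a. a \<in> A \<Longrightarrow> \<bar>regret n a\<bar> \<le> L" and "a \<in> A"
  shows "(\<Sum>n<N. real (n + 1) * regret n a) \<le> real N * (L * sqrt (real (card A) * real N))"
  using weighted_regret_le_q[OF assms(2)] q_le[OF assms] by (meson mult_left_mono of_nat_0_le_iff order_trans)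

lemma sum_q_Suc_mult_regret_nonneg: "0 \<le> (\<Sum>a\<in>A. q (Suc n) a * regret n a)"
proof -
  have "q n a * regret n a \<le> q (Suc n) a * regret n a" if a: "a \<in> A" for a
    using q_nonneg[OF a, of n]
    by (cases "0 \<le> q n a + regret n a")
      (auto simp: q_Suc_regret[OF a] max_def algebra_simps mult_nonneg_nonpos)
  then have "(\<Sum>a\<in>A. q n a * regret n a) \<le> (\<Sum>a\<in>A. q (Suc n) a * regret n a)"
    by (rule sum_mono)
  then show ?thesis by (simp add: sum_q_mult_regret)
qed

lemma q_eq_0_if_q_Suc_eq_0:
  assumes "\<forall>b\<in>A. q (Suc n) b = 0" and "a \<in> A"
  shows "q n a = 0"
proof -
  have "q n b * regret n b \<le> - (q n b)\<^sup>2" if b: "b \<in> A" for b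
  proof -
    have "regret n b \<le> - q n b"
      using assms(1) b q_Suc_regret[OF b, of n] by (simp add: max_def split: if_splits)
    then have "q n b * regret n b \<le> q n b * (- q n b)"
      using q_nonneg[OF b, of n] by (rule mult_left_mono)
    then show ?thesis by (simp add: power2_eq_square)
  qed
  then have "(\<Sum>b\<in>A. (q n b)\<^sup>2) \<le> 0"
    using sum_mono[of A "\<lambda>b. q n b * regret n b" "\<lambda>b. - (q n b)\<^sup>2"] sum_q_mult_regret[of n]
    by (simp add: sum_negf)
  then have "(\<Sum>b\<in>A. (q n b)\<^sup>2) = 0"
    by (simp add: order_antisym sum_nonneg)
  then show ?thesis
    using sum_nonneg_eq_0_iff[OF finite_A, of "\<lambda>b. (q n b)\<^sup>2"] assms(2) by simp
qed

lemma sum_regret_eq_0_if_q_eq_0: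
  assumes "\<forall>b\<in>A. q n b = 0"
  shows "(\<Sum>a\<in>A. regret n a) = 0"
proof -
  have "rm (q n) A b = 1 / real (card A)" for b
    using assms by (simp add: rm_def)
  then show ?thesis
    using finite_A A_nonempty by (simp add: regret_def sum_subtractf sum_distrib_left)
qed

text \<open>The strategy played next has nonnegative expected regret against the current values;
  under alternating updates this makes every new strategy of the first player at least as good
  against the second player's current strategy as the old one.\<close>

lemma next_strategy_regret_nonneg: "0 \<le> (\<Sum>a\<in>A. rm (q (Suc n)) A a * regret n a)"
proof (cases "\<exists>b\<in>A. 0 < q (Suc n) b")
  case True
  then obtain b where b: "b \<in> A" "0 < q (Suc n) b" by auto
  then have "0 < (\<Sum>c\<in>A. q (Suc n) c)"
    using member_le_sum[OF b(1), of "q (Suc n)"] finite_A q_nonneg by force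
  moreover have "(\<Sum>c\<in>A. q (Suc n) c) * (\<Sum>a\<in>A. rm (q (Suc n)) A a * regret n a) =
      (\<Sum>a\<in>A. q (Suc n) a * regret n a)"
    by (rule sum_mult_sum_rm[OF finite_A]) (simp add: q_nonneg)
  ultimately show ?thesis
    using sum_q_Suc_mult_regret_nonneg[of n] by (metis zero_le_mult_iff not_less)
next
  case False
  then have "\<forall>b\<in>A. q (Suc n) b = 0"
    using q_nonneg by (meson linorder_not_le order_antisym)
  then have "\<forall>b\<in>A. q n b = 0"
    using q_eq_0_if_q_Suc_eq_0 by blast
  moreover have "rm (q (Suc n)) A a = 1 / real (card A)" for a
    using False by (simp add: rm_def)
  ultimately show ?thesis
    using sum_regret_eq_0_if_q_eq_0 by (simp add: sum_divide_distrib[symmetric])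
qed

end

section \<open>CFR+ with alternating updates\<close>

lemma exp_util_sum_left:
  "exp_util G (\<lambda>h. c * (\<Sum>i\<in>S. w i * R i h)) r2 = c * (\<Sum>i\<in>S. w i * exp_util G (R i) r2)"
  unfolding exp_util_def
  by (simp add: sum_distrib_left sum_distrib_right mult_ac sum.swap[of _ "terminals G"])

lemma exp_util_sum_right:
  "exp_util G r1 (\<lambda>h. c * (\<Sum>i\<in>S. w i * R i h)) = c * (\<Sum>i\<in>S. w i * exp_util G r1 (R i))"
  unfolding exp_util_def
  by (simp add: sum_distrib_left sum_distrib_right mult_ac sum.swap[of _ "terminals G"])

lemma scaled_expectation_le:
  fixes r B :: real and s R :: "'b \<Rightarrow> real"
  assumes "0 \<le> r" and "r \<le> 1" and "\<forall>a\<in>A. 0 \<le> s a" and "sum s A = 1"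
    and "\<forall>a\<in>A. R a \<le> B" and "0 \<le> B"
  shows "r * (\<Sum>a\<in>A. s a * R a) \<le> B"
proof -
  have "(\<Sum>a\<in>A. s a * R a) \<le> (\<Sum>a\<in>A. s a * B)"
    using assms(3,5) by (intro sum_mono mult_left_mono) auto
  also have "\<dots> = B"
    using assms(4) by (simp add: sum_distrib_right[symmetric])
  finally have "(\<Sum>a\<in>A. s a * R a) \<le> B" .
  then show ?thesis
    using assms(1,2,6) by (cases "0 \<le> (\<Sum>a\<in>A. s a * R a)")
      (auto intro: order_trans[OF mult_left_le_one_le] order_trans[OF mult_nonneg_nonpos])
qed

lemma weighted_average_bound:
  fixes t k :: nat and N L :: real
  assumes "1 \<le> t" and "0 \<le> N" and "0 \<le> L"
  shows "2 / (real t ^ 2 + real t) * (N * (real t * (L * sqrt (real k * real t)))) \<le>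
    2 * N * L * sqrt (real k / real t)"
proof -
  have t: "0 < real t" using assms(1) by simp
  have "real k * real t = (real t)\<^sup>2 * (real k / real t)"
    using t by (simp add: power2_eq_square)
  then have sqrt_kt: "sqrt (real k * real t) = real t * sqrt (real k / real t)"
    using t by (metis abs_of_pos real_sqrt_abs real_sqrt_mult)
  have "2 / (real t ^ 2 + real t) * (N * (real t * (L * sqrt (real k * real t)))) =
      (2 * N * L * sqrt (real k / real t)) * (real t * real t / (real t ^ 2 + real t))"
    unfolding sqrt_kt by (simp add: field_simps)
  also have "\<dots> \<le> (2 * N * L * sqrt (real k / real t)) * 1"
    using t assms(2,3)
    by (intro mult_left_mono) (simp_all add: power2_eq_square divide_le_eq add_pos_pos)
  finally show ?thesis by simp
qed

context game
begin

lemma strategy_rm: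
  assumes "p \<in> {1, 2}"
  shows "strategy G p (\<lambda>I. rm (x I) (iacts G I))"
  unfolding strategy_def
proof
  fix I assume "I \<in> infosets G p"
  then show "(\<forall>a\<in>iacts G I. 0 \<le> rm (x I) (iacts G I) a) \<and> sum (rm (x I) (iacts G I)) (iacts G I) = 1"
    using rm_distrib[OF finite_nonempty_iacts[OF assms]] by simp
qed

lemma expl_le:
  assumes "\<And>s. strategy G 1 s \<Longrightarrow> exp_util G (reach G 1 s) r2 \<le> b1"
    and "\<And>s. strategy G 2 s \<Longrightarrow> - exp_util G r1 (reach G 2 s) \<le> b2"
  shows "expl G r1 r2 \<le> b1 + b2"
proof -
  have nonempty: "{s. strategy G p s} \<noteq> {}" if "p \<in> {1, 2}" for p
    using strategy_rm[OF that] by blast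
  have "(SUP s\<in>{s. strategy G 1 s}. exp_util G (reach G 1 s) r2) \<le> b1"
    by (rule cSUP_least) (use nonempty[of 1] assms(1) in auto)
  moreover have "(SUP s\<in>{s. strategy G 2 s}. - exp_util G r1 (reach G 2 s)) \<le> b2"
    by (rule cSUP_least) (use nonempty[of 2] assms(2) in auto)
  ultimately show ?thesis
    unfolding expl_def by (rule add_mono)
qed

lemma weighted_regret_le_card_infosets:
  assumes p: "p \<in> {1, 2}" and s: "hist_strategy G p s"
    and bound: "\<And>I a. I \<in> infosets G p \<Longrightarrow> a \<in> iacts G I \<Longrightarrow>
      (\<Sum>n<N. w n * inst_regret G p (\<sigma> n) (oth n) I a) \<le> B"
    and B: "0 \<le> B"
  shows "(\<Sum>n<N. w n * (cfv G p s (oth n) [] - cfv G p (\<sigma> n) (oth n) [])) \<le> real (card (infosets G p)) * B"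
proof -
  have "(\<Sum>n<N. w n * (cfv G p s (oth n) [] - cfv G p (\<sigma> n) (oth n) [])) =
      (\<Sum>I\<in>infosets G p. reach G p s (iset_rep I) *
         (\<Sum>a\<in>iacts G I. s I a * (\<Sum>n<N. w n * inst_regret G p (\<sigma> n) (oth n) I a)))"
    unfolding cfv_Nil_diff_eq_sum_inst_regret[OF p s]
    by (simp add: sum_distrib_left sum.swap[of _ "{..<N}"] mult_ac)
  also have "\<dots> \<le> (\<Sum>I\<in>infosets G p. B)"
  proof (rule sum_mono)
    fix I assume I: "I \<in> infosets G p"
    note rep = infoset_member[OF p I iset_rep_in[OF p I]]
    then have "iset_rep I \<in> hist G" by (simp add: nonterm_def)
    show "reach G p s (iset_rep I) *
        (\<Sum>a\<in>iacts G I. s I a * (\<Sum>n<N. w n * inst_regret G p (\<sigma> n) (oth n) I a)) \<le> B"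
    proof (rule scaled_expectation_le)
      show "0 \<le> reach G p s (iset_rep I)" and "reach G p s (iset_rep I) \<le> 1"
        using reach_nonneg_le_1[OF s \<open>iset_rep I \<in> hist G\<close>] by simp_all
      show "\<forall>a\<in>iacts G I. 0 \<le> s I a" and "sum (s I) (iacts G I) = 1"
        using s rep unfolding hist_strategy_def by metis+
    qed (use bound[OF I] B in auto)
  qed
  finally show ?thesis by simp
qed

lemma card_iacts_le_max_acts: "I \<in> infosets G 1 \<union> infosets G 2 \<Longrightarrow> card (iacts G I) \<le> max_acts G"
  unfolding max_acts_def by (rule Max_ge) (auto simp: finite_infosets)

end

locale cfr_plus_run = game +
  fixes q :: "nat \<Rightarrow> 'a list set \<Rightarrow> 'a \<Rightarrow> real"
  assumes cfr_plus: "cfr_plus G q"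
begin

abbreviation \<sigma> :: "nat \<Rightarrow> 'a strat" where
  "\<sigma> \<equiv> cfr_strat G q"

text \<open>With alternating updates, the values of player 1 at iteration \<open>n\<close> are computed against
  \<open>\<sigma> n\<close> and those of player 2 against the already updated \<open>\<sigma> (n + 1)\<close>.\<close>

definition cfr_opp :: "nat \<Rightarrow> nat \<Rightarrow> 'a strat" where
  "cfr_opp p n = (if p = 1 then \<sigma> n else \<sigma> (Suc n))"

definition cfr_regret_bound :: "nat \<Rightarrow> real" where
  "cfr_regret_bound t = real t * (payoff_range G * sqrt (real (max_acts G) * real t))"

lemma cfr_strat_eq_rm: "\<sigma> n = (\<lambda>I. rm (q n I) (iacts G I))"
  by (simp add: fun_eq_iff cfr_strat_def)

lemma cfr_strat_strategy: "p \<in> {1, 2} \<Longrightarrow> strategy G p (\<sigma> n)"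
  unfolding cfr_strat_eq_rm by (rule strategy_rm)

lemma cfr_strat_hist_strategy: "p \<in> {1, 2} \<Longrightarrow> hist_strategy G p (\<sigma> n)"
  using strategy_imp_hist_strategy cfr_strat_strategy by blast

lemma cfr_opp_hist_strategy: "p \<in> {1, 2} \<Longrightarrow> hist_strategy G (3 - p) (cfr_opp p n)"
  by (auto simp: cfr_opp_def cfr_strat_hist_strategy)

lemma rm_plus_infoset:
  assumes p: "p \<in> {1, 2}" and I: "I \<in> infosets G p"
  shows "rm_plus (iacts G I) (\<lambda>n. q n I) (\<lambda>n. cfv_vec G p (\<sigma> n) (cfr_opp p n) I)"
proof
  show "finite (iacts G I)" and "iacts G I \<noteq> {}"
    using finite_nonempty_iacts[OF p I] by simp_all
  show "q 0 I a = 0" for a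
    using cfr_plus by (simp add: cfr_plus_def)
  show "q (Suc n) I a = max 0 (q n I a + cfv_vec G p (\<sigma> n) (cfr_opp p n) I a -
      (\<Sum>b\<in>iacts G I. rm (q n I) (iacts G I) b * cfv_vec G p (\<sigma> n) (cfr_opp p n) I b))"
    if "a \<in> iacts G I" for n a
    using cfr_plus p I that unfolding cfr_plus_def cf_vec_1_eq cf_vec_2_eq
    by (auto simp: cfr_opp_def cfr_strat_def)
qed

lemma rm_plus_regret_eq_inst_regret:
  assumes "p \<in> {1, 2}" and "I \<in> infosets G p"
  shows "rm_plus.regret (iacts G I) (\<lambda>n. q n I) (\<lambda>n. cfv_vec G p (\<sigma> n) (cfr_opp p n) I) n a =
    inst_regret G p (\<sigma> n) (cfr_opp p n) I a"
  by (simp add: rm_plus.regret_def[OF rm_plus_infoset[OF assms]] inst_regret_def cfr_strat_def)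

lemma cfr_regret_bound_nonneg: "0 \<le> cfr_regret_bound t"
  unfolding cfr_regret_bound_def by (intro mult_nonneg_nonneg payoff_range_nonneg) auto

lemma cfr_weighted_inst_regret_le:
  assumes p: "p \<in> {1, 2}" and I: "I \<in> infosets G p" and a: "a \<in> iacts G I"
  shows "(\<Sum>n<t. real (n + 1) * inst_regret G p (\<sigma> n) (cfr_opp p n) I a) \<le> cfr_regret_bound t"
proof -
  interpret rm_plus "iacts G I" "\<lambda>n. q n I" "\<lambda>n. cfv_vec G p (\<sigma> n) (cfr_opp p n) I"
    by (rule rm_plus_infoset[OF p I])
  have "\<bar>regret n b\<bar> \<le> payoff_range G" if "b \<in> iacts G I" for n b
    using abs_inst_regret_le[OF p cfr_strat_hist_strategy[OF p] cfr_opp_hist_strategy[OF p] I that]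
    by (simp add: rm_plus_regret_eq_inst_regret[OF p I])
  then have "(\<Sum>n<t. real (n + 1) * inst_regret G p (\<sigma> n) (cfr_opp p n) I a) \<le>
      real t * (payoff_range G * sqrt (real (card (iacts G I)) * real t))"
    using weighted_regret_le[OF _ a] by (simp add: rm_plus_regret_eq_inst_regret[OF p I])
  also have "\<dots> \<le> cfr_regret_bound t"
    unfolding cfr_regret_bound_def using card_iacts_le_max_acts[of I] p I payoff_range_nonneg
    by (intro mult_left_mono real_sqrt_le_mono mult_right_mono) auto
  finally show ?thesis .
qed

lemma cfr_weighted_regret_le:
  assumes p: "p \<in> {1, 2}" and s: "strategy G p s"
  shows "(\<Sum>n<t. real (n + 1) * (cfv G p s (cfr_opp p n) [] - cfv G p (\<sigma> n) (cfr_opp p n) [])) \<le>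
    real (card (infosets G p)) * cfr_regret_bound t"
  using cfr_weighted_inst_regret_le[OF p] cfr_regret_bound_nonneg
  by (rule weighted_regret_le_card_infosets[OF p strategy_imp_hist_strategy[OF p s]])

lemma cfr_alternating_improvement: "cfv G 1 (\<sigma> n) (\<sigma> n) [] \<le> cfv G 1 (\<sigma> (Suc n)) (\<sigma> n) []"
proof -
  have "0 \<le> (\<Sum>I\<in>infosets G 1. reach G 1 (\<sigma> (Suc n)) (iset_rep I) *
      (\<Sum>a\<in>iacts G I. \<sigma> (Suc n) I a * inst_regret G 1 (\<sigma> n) (\<sigma> n) I a))"
  proof (rule sum_nonneg)
    fix I assume I: "I \<in> infosets G 1"
    interpret rm_plus "iacts G I" "\<lambda>n. q n I" "\<lambda>n. cfv_vec G 1 (\<sigma> n) (cfr_opp 1 n) I"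
      by (rule rm_plus_infoset[OF _ I]) simp
    have "0 \<le> (\<Sum>a\<in>iacts G I. \<sigma> (Suc n) I a * inst_regret G 1 (\<sigma> n) (cfr_opp 1 n) I a)"
      using next_strategy_regret_nonneg[of n] rm_plus_regret_eq_inst_regret[of 1 I] I
      by (simp add: cfr_strat_def)
    then have "0 \<le> (\<Sum>a\<in>iacts G I. \<sigma> (Suc n) I a * inst_regret G 1 (\<sigma> n) (\<sigma> n) I a)"
      by (simp add: cfr_opp_def)
    moreover have "iset_rep I \<in> hist G"
      using infoset_member[OF _ I iset_rep_in[OF _ I]] by (simp add: nonterm_def)
    ultimately show "0 \<le> reach G 1 (\<sigma> (Suc n)) (iset_rep I) *
        (\<Sum>a\<in>iacts G I. \<sigma> (Suc n) I a * inst_regret G 1 (\<sigma> n) (\<sigma> n) I a)"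
      using reach_nonneg_le_1(1)[OF cfr_strat_hist_strategy] by simp
  qed
  then show ?thesis
    using cfv_Nil_diff_eq_sum_inst_regret[OF _ cfr_strat_hist_strategy, of 1 "Suc n" "\<sigma> n" "\<sigma> n"]
    by simp
qed

lemma cfr_best_response_1_le:
  assumes "strategy G 1 s" and "0 \<le> c"
  shows "exp_util G (reach G 1 s) (\<lambda>h. c * (\<Sum>i=0..<t. real (i + 1) * reach G 2 (\<sigma> i) h)) \<le>
    c * ((\<Sum>n<t. real (n + 1) * cfv G 1 (\<sigma> n) (\<sigma> n) []) + real (card (infosets G 1)) * cfr_regret_bound t)"
proof -
  have "exp_util G (reach G 1 s) (\<lambda>h. c * (\<Sum>i=0..<t. real (i + 1) * reach G 2 (\<sigma> i) h)) =
      c * (\<Sum>n<t. real (n + 1) * cfv G 1 s (\<sigma> n) [])"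
    unfolding exp_util_sum_right exp_util_eq_cfv atLeast0LessThan ..
  also have "\<dots> \<le> c * ((\<Sum>n<t. real (n + 1) * cfv G 1 (\<sigma> n) (\<sigma> n) []) +
      real (card (infosets G 1)) * cfr_regret_bound t)"
    using cfr_weighted_regret_le[of 1 s t] assms
    by (intro mult_left_mono) (simp_all add: cfr_opp_def right_diff_distrib sum_subtractf)
  finally show ?thesis .
qed

lemma cfr_best_response_2_le:
  assumes "strategy G 2 s" and "0 \<le> c"
  shows "- exp_util G (\<lambda>h. c * (\<Sum>i=1..t. real i * reach G 1 (\<sigma> i) h)) (reach G 2 s) \<le>
    c * (real (card (infosets G 2)) * cfr_regret_bound t - (\<Sum>n<t. real (n + 1) * cfv G 1 (\<sigma> (Suc n)) (\<sigma> n) []))"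
proof -
  have "- exp_util G (\<lambda>h. c * (\<Sum>i=1..t. real i * reach G 1 (\<sigma> i) h)) (reach G 2 s) =
      - (c * (\<Sum>i=1..t. real i * cfv G 1 (\<sigma> i) s []))"
    unfolding exp_util_sum_left exp_util_eq_cfv ..
  also have "\<dots> = c * (\<Sum>n<t. real (n + 1) * cfv G 2 s (\<sigma> (Suc n)) [])"
    by (simp add: sum.atLeast1_atMost_eq cfv_2_Nil sum_negf)
  also have "\<dots> \<le> c * (real (card (infosets G 2)) * cfr_regret_bound t -
      (\<Sum>n<t. real (n + 1) * cfv G 1 (\<sigma> (Suc n)) (\<sigma> n) []))"
    using cfr_weighted_regret_le[of 2 s t] assms
    by (intro mult_left_mono) (simp_all add: cfr_opp_def cfv_2_Nil right_diff_distrib sum_subtractf sum_negf)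
  finally show ?thesis .
qed

end

theorem theorem4:
  fixes G :: "'a efg" and q :: "nat \<Rightarrow> 'a list set \<Rightarrow> 'a \<Rightarrow> real" and t :: nat
  assumes "wf_game G" and "cfr_plus G q" and "1 \<le> t"
  shows "expl G
           (\<lambda>h. 2 / (real t ^ 2 + real t) * (\<Sum>i=1..t. real i * reach G 1 (cfr_strat G q i) h))
           (\<lambda>h. 2 / (real t ^ 2 + real t) * (\<Sum>i=0..<t. real (i + 1) * reach G 2 (cfr_strat G q i) h))
         \<le> 2 * real (card (infosets G 1 \<union> infosets G 2)) * payoff_range G
              * sqrt (real (max_acts G) / real t)"
proof -
  interpret cfr_plus_run G q
    using assms(1,2) by unfold_locales
  define c where "c = 2 / (real t ^ 2 + real t)"
  let ?V = "\<lambda>i j. real (j + 1) * cfv G 1 (\<sigma> i) (\<sigma> j) []"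
  let ?N = "\<lambda>p. real (card (infosets G p))"
  have c: "0 \<le> c" unfolding c_def by simp
  have "expl G (\<lambda>h. c * (\<Sum>i=1..t. real i * reach G 1 (\<sigma> i) h))
      (\<lambda>h. c * (\<Sum>i=0..<t. real (i + 1) * reach G 2 (\<sigma> i) h)) \<le>
      c * ((\<Sum>n<t. ?V n n) + ?N 1 * cfr_regret_bound t) +
      c * (?N 2 * cfr_regret_bound t - (\<Sum>n<t. ?V (Suc n) n))"
    using cfr_best_response_1_le[OF _ c] cfr_best_response_2_le[OF _ c] by (rule expl_le)
  also have "\<dots> \<le> c * (real (card (infosets G 1 \<union> infosets G 2)) * cfr_regret_bound t)"
  proof -
    have "(\<Sum>n<t. ?V n n) \<le> (\<Sum>n<t. ?V (Suc n) n)"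
      by (intro sum_mono mult_left_mono cfr_alternating_improvement) simp
    then show ?thesis
      using c finite_infosets infosets_disjoint
      by (simp add: card_Un_disjoint algebra_simps mult_left_mono)
  qed
  also have "\<dots> \<le> 2 * real (card (infosets G 1 \<union> infosets G 2)) * payoff_range G
      * sqrt (real (max_acts G) / real t)"
    unfolding c_def cfr_regret_bound_def
    by (rule weighted_average_bound[OF assms(3) _ payoff_range_nonneg]) simp
  finally show ?thesis unfolding c_def .
qed

end
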